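(* Let $\mathcal{C}$ be the full subcategory of $\mathrm{Aff}_{C^\infty}$ of connected objects that have a point, and let $T=\mathrm{Spec}(\mathbb{R}[\epsilon])$ where $\mathbb{R}[\epsilon]=\mathbb{R}[y]/(y^2)$. For any object $X$ of $\mathcal{C}$, the product $X\times T$ computed in $\mathrm{Aff}_{C^\infty}$ is also an object of $\mathcal{C}$.
   Context: A $C^\infty$-ring is a model of the algebraic theory whose $n$-ary operations are the smooth functions $\mathbb{R}^n\to\mathbb{R}$. $\mathrm{Aff}_{C^\infty}$ is the opposite of the category of finitely generated $C^\infty$-rings, and $\mathrm{Spec}\,A$ denotes $A$ regarded as an object there (products in $\mathrm{Aff}_{C^\infty}$ are coproducts of $C^\infty$-rings). An object $\mathrm{Spec}\,A$ is connected if $A$ has exactly two idempotents (equivalently, exactly two complemented subobjects in the extensive category $\mathrm{Aff}_{C^\infty}$), and has a point if there is a $C^\infty$-ring homomorphism $A\to\mathbb{R}$. $\mathbb{R}[\epsilon]$ is a Weil algebra with its canonical $C^\infty$-ring structure. *)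

theory Defs
  imports "HOL-Analysis.Analysis"
begin

text \<open>A point of R^n is represented as a function nat => real of which only the
coordinates 0..n-1 matter; an n-ary function is a function (nat => real) => real
that depends only on the first n coordinates.\<close>

definition depends_on_first :: "nat \<Rightarrow> ((nat \<Rightarrow> real) \<Rightarrow> 'b) \<Rightarrow> bool" where
  "depends_on_first n f \<longleftrightarrow> (\<forall>x y. (\<forall>i<n. x i = y i) \<longrightarrow> f x = f y)"

definition partial :: "nat \<Rightarrow> ((nat \<Rightarrow> real) \<Rightarrow> real) \<Rightarrow> ((nat \<Rightarrow> real) \<Rightarrow> real)" where
  "partial i f = (\<lambda>x. deriv (\<lambda>t. f (x(i := t))) (x i))"

fun iter_partial :: "nat list \<Rightarrow> ((nat \<Rightarrow> real) \<Rightarrow> real) \<Rightarrow> ((nat \<Rightarrow> real) \<Rightarrow> real)" where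
  "iter_partial [] f = f"
| "iter_partial (i # ds) f = partial i (iter_partial ds f)"

definition cont_n :: "nat \<Rightarrow> ((nat \<Rightarrow> real) \<Rightarrow> real) \<Rightarrow> bool" where
  "cont_n n h \<longleftrightarrow> (\<forall>x. \<forall>e>0. \<exists>d>0. \<forall>y. (\<forall>i<n. \<bar>y i - x i\<bar> < d) \<longrightarrow> \<bar>h y - h x\<bar> < e)"

definition smooth_fun :: "nat \<Rightarrow> ((nat \<Rightarrow> real) \<Rightarrow> real) \<Rightarrow> bool" where
  "smooth_fun n f \<longleftrightarrow> depends_on_first n f \<and>
     (\<forall>ds. set ds \<subseteq> {..<n} \<longrightarrow>
        cont_n n (iter_partial ds f) \<and>
        (\<forall>i<n. \<forall>x. (\<lambda>t. iter_partial ds f (x(i := t))) differentiable (at (x i))))"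

type_synonym 'a cinf_ops = "nat \<Rightarrow> ((nat \<Rightarrow> real) \<Rightarrow> real) \<Rightarrow> (nat \<Rightarrow> 'a) \<Rightarrow> 'a"

text \<open>Carrier A with, for each n and smooth f : R^n -> R, an operation A^n -> A
(n-tuples encoded as nat => 'a, only first n entries relevant).\<close>
definition cinf_ring :: "'a set \<Rightarrow> 'a cinf_ops \<Rightarrow> bool" where
  "cinf_ring A \<Phi> \<longleftrightarrow>
     (\<forall>n f a. smooth_fun n f \<longrightarrow> (\<forall>i<n. a i \<in> A) \<longrightarrow> \<Phi> n f a \<in> A) \<and>
     (\<forall>n f a b. smooth_fun n f \<longrightarrow> (\<forall>i<n. a i = b i) \<longrightarrow> \<Phi> n f a = \<Phi> n f b) \<and>
     (\<forall>n i a. i < n \<longrightarrow> (\<forall>j<n. a j \<in> A) \<longrightarrow> \<Phi> n (\<lambda>x. x i) a = a i) \<and>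
     (\<forall>n m f g a. smooth_fun m f \<longrightarrow> (\<forall>j<m. smooth_fun n (g j)) \<longrightarrow> (\<forall>i<n. a i \<in> A) \<longrightarrow>
        \<Phi> n (\<lambda>x. f (\<lambda>j. g j x)) a = \<Phi> m f (\<lambda>j. \<Phi> n (g j) a))"

definition cinf_hom :: "'a set \<Rightarrow> 'a cinf_ops \<Rightarrow> 'b set \<Rightarrow> 'b cinf_ops \<Rightarrow> ('a \<Rightarrow> 'b) \<Rightarrow> bool" where
  "cinf_hom A \<Phi> B \<Psi> h \<longleftrightarrow> (\<forall>x\<in>A. h x \<in> B) \<and>
     (\<forall>n f a. smooth_fun n f \<longrightarrow> (\<forall>i<n. a i \<in> A) \<longrightarrow> h (\<Phi> n f a) = \<Psi> n f (h \<circ> a))"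

definition cinf_closed :: "'a cinf_ops \<Rightarrow> 'a set \<Rightarrow> bool" where
  "cinf_closed \<Phi> S \<longleftrightarrow> (\<forall>n f a. smooth_fun n f \<longrightarrow> (\<forall>i<n. a i \<in> S) \<longrightarrow> \<Phi> n f a \<in> S)"

definition cinf_fg :: "'a set \<Rightarrow> 'a cinf_ops \<Rightarrow> bool" where
  "cinf_fg A \<Phi> \<longleftrightarrow> (\<exists>G. finite G \<and> G \<subseteq> A \<and>
       (\<forall>S. G \<subseteq> S \<longrightarrow> S \<subseteq> A \<longrightarrow> cinf_closed \<Phi> S \<longrightarrow> S = A))"

definition cinf_mul :: "'a cinf_ops \<Rightarrow> 'a \<Rightarrow> 'a \<Rightarrow> 'a" where
  "cinf_mul \<Phi> x y = \<Phi> 2 (\<lambda>v. v 0 * v 1) (\<lambda>i. if i = 0 then x else y)"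

definition cinf_idempotents :: "'a set \<Rightarrow> 'a cinf_ops \<Rightarrow> 'a set" where
  "cinf_idempotents A \<Phi> = {e \<in> A. cinf_mul \<Phi> e e = e}"

definition cinf_connected :: "'a set \<Rightarrow> 'a cinf_ops \<Rightarrow> bool" where
  "cinf_connected A \<Phi> \<longleftrightarrow> card (cinf_idempotents A \<Phi>) = 2"

definition real_cinf :: "real cinf_ops" where
  "real_cinf n f a = f a"

definition cinf_has_point :: "'a set \<Rightarrow> 'a cinf_ops \<Rightarrow> bool" where
  "cinf_has_point A \<Phi> \<longleftrightarrow> (\<exists>h. cinf_hom A \<Phi> (UNIV :: real set) real_cinf h)"

text \<open>The Weil algebra R[eps] = R[y]/(y^2), a + b eps encoded as (a,b), with its canonical
C^infinity structure f(a + b eps) = f(a) + (sum_i d_i f(a) b_i) eps.\<close>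
definition dual_cinf :: "(real \<times> real) cinf_ops" where
  "dual_cinf n f a = (f (fst \<circ> a), (\<Sum>i<n. partial i f (fst \<circ> a) * snd (a i)))"

text \<open>Coproduct in the category of finitely generated C^infinity-rings (= product in Aff).
Test objects range over finitely generated C^infinity-rings whose carrier lies in a fixed
type of cardinality at least the continuum; every finitely generated C^infinity-ring
(a quotient of C^infinity(R^n)) is isomorphic to one of these.\<close>
definition is_cinf_coproduct ::
  "'a set \<Rightarrow> 'a cinf_ops \<Rightarrow> 'b set \<Rightarrow> 'b cinf_ops \<Rightarrow> 'c set \<Rightarrow> 'c cinf_ops \<Rightarrow>
   ('a \<Rightarrow> 'c) \<Rightarrow> ('b \<Rightarrow> 'c) \<Rightarrow> bool" where
  "is_cinf_coproduct A \<Phi> B \<Psi> C \<Xi> i1 i2 \<longleftrightarrow>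
     cinf_ring C \<Xi> \<and> cinf_fg C \<Xi> \<and> cinf_hom A \<Phi> C \<Xi> i1 \<and> cinf_hom B \<Psi> C \<Xi> i2 \<and>
     (\<forall>(D :: ((nat \<Rightarrow> real) \<Rightarrow> real) set set) \<Delta> u v.
        cinf_ring D \<Delta> \<and> cinf_fg D \<Delta> \<and> cinf_hom A \<Phi> D \<Delta> u \<and> cinf_hom B \<Psi> D \<Delta> v \<longrightarrow>
        (\<exists>w. cinf_hom C \<Xi> D \<Delta> w \<and> (\<forall>x\<in>A. w (i1 x) = u x) \<and> (\<forall>x\<in>B. w (i2 x) = v x) \<and>
           (\<forall>w'. cinf_hom C \<Xi> D \<Delta> w' \<and> (\<forall>x\<in>A. w' (i1 x) = u x) \<and> (\<forall>x\<in>B. w' (i2 x) = v x)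
                 \<longrightarrow> (\<forall>y\<in>C. w' y = w y))))"

end

theory Submission
  imports Defs
begin

text \<open>The coproduct \<open>P\<close> of \<open>A\<close> and \<open>\<real>[\<epsilon>]\<close> retracts onto \<open>A\<close> (identity on \<open>A\<close>, augmentation
  \<open>\<real>[\<epsilon>] \<rightarrow> \<real>\<close> on the other factor), so a point of \<open>A\<close> gives a point of \<open>P\<close>.
  By Hadamard's lemma every element of \<open>P\<close> has the form \<open>\<alpha> + \<epsilon> g\<close> with \<open>\<alpha> \<in> A\<close>. If it is
  idempotent, then \<open>\<alpha>\<close>, its image under the retraction, is an idempotent of the connected ring
  \<open>A\<close>, hence \<open>0\<close> or \<open>1\<close>; and then \<open>\<epsilon>\<^sup>2 = 0\<close> forces \<open>\<epsilon> g = 0\<close>. So \<open>P\<close> has exactly the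
  idempotents \<open>0 \<noteq> 1\<close>.\<close>

section \<open>Smooth functions\<close>

definition pdiff_fun :: "nat \<Rightarrow> ((nat \<Rightarrow> real) \<Rightarrow> real) \<Rightarrow> bool" where
  "pdiff_fun n g \<longleftrightarrow> depends_on_first n g \<and> cont_n n g \<and>
     (\<forall>i<n. \<forall>x. (\<lambda>t. g (x(i := t))) differentiable (at (x i)))"

lemma smooth_fun_coinduct:
  assumes "K f" and step: "\<And>g. K g \<Longrightarrow> pdiff_fun n g \<and> (\<forall>i<n. K (partial i g))"
  shows "smooth_fun n f"
proof -
  have "K (iter_partial ds f)" if "set ds \<subseteq> {..<n}" for ds
    using that by (induction ds) (use assms in auto)
  then show ?thesis using step[OF \<open>K f\<close>] step unfolding smooth_fun_def pdiff_fun_def by blast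
qed

lemma iter_partial_snoc: "iter_partial ds (partial i f) = iter_partial (ds @ [i]) f"
  by (induction ds) auto

lemma smooth_fun_imp_pdiff: "smooth_fun n f \<Longrightarrow> pdiff_fun n f"
  unfolding smooth_fun_def pdiff_fun_def by (metis empty_set empty_subsetI iter_partial.simps(1))

lemma smooth_fun_depends: "smooth_fun n f \<Longrightarrow> depends_on_first n f"
  unfolding smooth_fun_def by blast

lemma depends_on_first_partial:
  assumes "depends_on_first n f" "i < n"
  shows "depends_on_first n (partial i f)"
  unfolding depends_on_first_def partial_def
proof (intro allI impI)
  fix x y :: "nat \<Rightarrow> real" assume xy: "\<forall>i<n. x i = y i"
  have "(\<lambda>t. f (x(i := t))) = (\<lambda>t. f (y(i := t)))"
    using assms(1) xy unfolding depends_on_first_def by (intro ext) auto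
  then show "deriv (\<lambda>t. f (x(i := t))) (x i) = deriv (\<lambda>t. f (y(i := t))) (y i)"
    using xy assms(2) by simp
qed

lemma smooth_fun_partial: "smooth_fun n f \<Longrightarrow> i < n \<Longrightarrow> smooth_fun n (partial i f)"
  unfolding smooth_fun_def by (auto simp: iter_partial_snoc depends_on_first_partial)

lemma pdiff_has_partial:
  assumes "pdiff_fun n f" "i < n"
  shows "((\<lambda>t. f (x(i := t))) has_real_derivative partial i f (x(i := t))) (at t)"
proof -
  have "(\<lambda>\<tau>. f ((x(i := t))(i := \<tau>))) differentiable (at ((x(i := t)) i))"
    using assms unfolding pdiff_fun_def by blast
  then have "(\<lambda>\<tau>. f (x(i := \<tau>))) differentiable (at t)" by simp
  then show ?thesis
    unfolding partial_def by (simp add: DERIV_deriv_iff_real_differentiable)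
qed

lemma partial_eqI:
  assumes "\<And>x t. ((\<lambda>\<tau>. g (x(i := \<tau>))) has_real_derivative D (x(i := t))) (at t)"
  shows "partial i g = D"
proof
  fix x
  show "partial i g x = D x"
    unfolding partial_def using DERIV_imp_deriv[OF assms[of x "x i"]] by simp
qed

lemma partial_unused_coordinate:
  assumes "depends_on_first n g" "n \<le> i"
  shows "partial i g = (\<lambda>_. 0)"
proof (rule partial_eqI)
  fix x :: "nat \<Rightarrow> real" and t
  have "(\<lambda>\<tau>. g (x(i := \<tau>))) = (\<lambda>_. g x)"
    using assms unfolding depends_on_first_def by (intro ext) auto
  then show "((\<lambda>\<tau>. g (x(i := \<tau>))) has_real_derivative 0) (at t)" by simp
qed

lemma cont_n_tendsto:
  assumes "cont_n n \<phi>" "\<And>i. i < n \<Longrightarrow> ((\<lambda>y. G y i) \<longlongrightarrow> G0 i) F"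
  shows "((\<lambda>y. \<phi> (G y)) \<longlongrightarrow> \<phi> G0) F"
proof (rule tendstoI)
  fix e :: real assume "e > 0"
  then obtain d where d: "d > 0" "\<And>y. (\<forall>i<n. \<bar>y i - G0 i\<bar> < d) \<Longrightarrow> \<bar>\<phi> y - \<phi> G0\<bar> < e"
    using assms(1) unfolding cont_n_def by blast
  have "\<forall>i\<in>{..<n}. \<forall>\<^sub>F y in F. \<bar>G y i - G0 i\<bar> < d"
    using assms(2) d(1) tendstoD by (fastforce simp: dist_real_def)
  then have "\<forall>\<^sub>F y in F. \<forall>i\<in>{..<n}. \<bar>G y i - G0 i\<bar> < d"
    by (rule eventually_ball_finite[rotated]) simp
  then show "\<forall>\<^sub>F y in F. dist (\<phi> (G y)) (\<phi> G0) < e"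
    by eventually_elim (use d in \<open>auto simp: dist_real_def\<close>)
qed

lemma cont_n_continuous_on:
  assumes "cont_n n \<phi>" "\<And>i. i < n \<Longrightarrow> continuous_on S (\<lambda>y. G y i)"
  shows "continuous_on S (\<lambda>y. \<phi> (G y))"
  unfolding continuous_on_def
proof
  fix x assume "x \<in> S"
  show "((\<lambda>y. \<phi> (G y)) \<longlongrightarrow> \<phi> (G x)) (at x within S)"
    by (rule cont_n_tendsto[OF assms(1)]) (use assms(2) \<open>x \<in> S\<close> in \<open>auto simp: continuous_on_def\<close>)
qed

text \<open>The metric on \<^typ>\<open>nat \<Rightarrow> real\<close> weights the \<open>k\<close>-th coordinate
  by \<open>2\<^sup>-\<^sup>k\<close>, so a point whose coordinates are all \<open>d\<close>-close to those of \<open>x\<close> is \<open>2d\<close>-close to \<open>x\<close>.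
  Since \<open>h\<close> ignores all but the first \<open>n\<close> coordinates, only those have to be controlled.\<close>

lemma continuous_imp_cont_n:
  assumes dep: "depends_on_first n h" and c: "continuous_on UNIV h"
  shows "cont_n n h"
  unfolding cont_n_def
proof (intro allI impI)
  fix x :: "nat \<Rightarrow> real" and e :: real assume "e > 0"
  then obtain r where r: "r > 0" "\<And>y. dist y x < r \<Longrightarrow> dist (h y) (h x) < e"
    using c unfolding continuous_on_iff by (metis UNIV_I)
  define d where "d = r / 3"
  have "d > 0" using r by (simp add: d_def)
  moreover have "\<bar>h y - h x\<bar> < e" if y: "\<forall>i<n. \<bar>y i - x i\<bar> < d" for y
  proof -
    define y' where "y' = (\<lambda>i. if i < n then y i else x i)"
    have "h y = h y'" using dep unfolding depends_on_first_def y'_def by auto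
    have le: "(1/2)^k * min (dist (y' (from_nat k)) (x (from_nat k))) 1 \<le> (1/2)^k * d" for k
    proof -
      have "min (dist (y' (from_nat k)) (x (from_nat k))) 1 \<le> d"
        using y \<open>d > 0\<close> by (auto simp: y'_def dist_real_def min_le_iff_disj)
      then show ?thesis by (intro mult_left_mono) auto
    qed
    have s1: "summable (\<lambda>k. (1/2::real)^k * d)"
      by (intro summable_mult2) (simp add: summable_geometric_iff)
    have s2: "summable (\<lambda>k. (1/2::real)^k * min (dist (y' (from_nat k)) (x (from_nat k))) 1)"
      by (rule summable_comparison_test'[OF s1]) (use le in auto)
    have "dist y' x = (\<Sum>k. (1/2)^k * min (dist (y' (from_nat k)) (x (from_nat k))) 1)"
      unfolding dist_fun_def by simp
    also have "\<dots> \<le> (\<Sum>k. (1/2::real)^k * d)"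
      by (rule suminf_le[OF le s2 s1])
    also have "\<dots> = 2 * d"
      using suminf_geometric[of "1/2::real"] suminf_mult2[of "\<lambda>k. (1/2::real)^k" d]
      by (simp add: summable_geometric_iff)
    finally have "dist y' x < r" using r \<open>d > 0\<close> by (simp add: d_def)
    then show ?thesis using r(2) \<open>h y = h y'\<close> by (simp add: dist_real_def)
  qed
  ultimately show "\<exists>d>0. \<forall>y. (\<forall>i<n. \<bar>y i - x i\<bar> < d) \<longrightarrow> \<bar>h y - h x\<bar> < e" by blast
qed

lemma cont_n_iff_continuous:
  "depends_on_first n h \<Longrightarrow> cont_n n h \<longleftrightarrow> continuous_on UNIV h"
  using cont_n_continuous_on[of n h UNIV "\<lambda>y. y"] continuous_imp_cont_n by auto

lemma pdiff_fun_const: "pdiff_fun n (\<lambda>_. c)"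
  unfolding pdiff_fun_def depends_on_first_def cont_n_def by auto

lemma pdiff_fun_add:
  assumes f: "pdiff_fun n f" and g: "pdiff_fun n g"
  shows "pdiff_fun n (\<lambda>x. f x + g x)"
proof -
  have dep: "depends_on_first n (\<lambda>x. f x + g x)"
    using f g unfolding pdiff_fun_def depends_on_first_def by metis
  have "continuous_on UNIV f" "continuous_on UNIV g"
    using f g cont_n_iff_continuous unfolding pdiff_fun_def by blast+
  then have "cont_n n (\<lambda>x. f x + g x)"
    using cont_n_iff_continuous[OF dep] by (auto intro!: continuous_intros)
  then show ?thesis using dep f g unfolding pdiff_fun_def by (auto intro: differentiable_add)
qed

lemma pdiff_fun_mult:
  assumes f: "pdiff_fun n f" and g: "pdiff_fun n g"
  shows "pdiff_fun n (\<lambda>x. f x * g x)"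
proof -
  have dep: "depends_on_first n (\<lambda>x. f x * g x)"
    using f g unfolding pdiff_fun_def depends_on_first_def by metis
  have "continuous_on UNIV f" "continuous_on UNIV g"
    using f g cont_n_iff_continuous unfolding pdiff_fun_def by blast+
  then have "cont_n n (\<lambda>x. f x * g x)"
    using cont_n_iff_continuous[OF dep] by (auto intro!: continuous_intros)
  then show ?thesis using dep f g unfolding pdiff_fun_def by (auto intro: differentiable_mult)
qed

lemma partial_const: "partial i (\<lambda>_. c) = (\<lambda>_. 0)"
  by (rule partial_eqI) simp

lemma partial_proj: "partial j (\<lambda>x. x i) = (\<lambda>_. if j = i then 1 else 0)"
  by (rule partial_eqI) (auto simp: fun_upd_def)

lemma partial_add:
  "pdiff_fun n f \<Longrightarrow> pdiff_fun n g \<Longrightarrow> i < n \<Longrightarrow>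
   partial i (\<lambda>x. f x + g x) = (\<lambda>x. partial i f x + partial i g x)"
  by (rule partial_eqI) (intro DERIV_add pdiff_has_partial)

lemma partial_mult:
  assumes "pdiff_fun n f" "pdiff_fun n g" "i < n"
  shows "partial i (\<lambda>x. f x * g x) = (\<lambda>x. partial i f x * g x + f x * partial i g x)"
proof (rule partial_eqI)
  fix x :: "nat \<Rightarrow> real" and t
  show "((\<lambda>\<tau>. f (x(i := \<tau>)) * g (x(i := \<tau>))) has_real_derivative
      partial i f (x(i := t)) * g (x(i := t)) + f (x(i := t)) * partial i g (x(i := t))) (at t)"
    using DERIV_mult[OF pdiff_has_partial[OF assms(1,3)] pdiff_has_partial[OF assms(2,3)]]
    by (simp add: algebra_simps)
qed

lemma smooth_const: "smooth_fun n (\<lambda>_. c)"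
  by (rule smooth_fun_coinduct[where K="\<lambda>g. \<exists>c. g = (\<lambda>_. c)"])
     (use pdiff_fun_const partial_const in auto)

lemma smooth_proj:
  assumes "i < n"
  shows "smooth_fun n (\<lambda>x. x i)"
proof (rule smooth_fun_coinduct[where K="\<lambda>g. g = (\<lambda>x. x i) \<or> (\<exists>c. g = (\<lambda>_. c))"])
  have dep: "depends_on_first n (\<lambda>x. x i)"
    using assms unfolding depends_on_first_def by metis
  have "pdiff_fun n (\<lambda>x. x i)"
    unfolding pdiff_fun_def cont_n_iff_continuous[OF dep]
  proof (intro conjI allI impI dep)
    show "(\<lambda>t. (x(j := t)) i) differentiable at (x j)" for j x
      by (cases "j = i") auto
  qed simp
  then show "pdiff_fun n g \<and> (\<forall>j<n. partial j g = (\<lambda>x. x i) \<or> (\<exists>c. partial j g = (\<lambda>_. c)))"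
    if "g = (\<lambda>x. x i) \<or> (\<exists>c. g = (\<lambda>_. c))" for g
    using that pdiff_fun_const partial_const partial_proj by blast
qed simp

text \<open>By Leibniz's rule, sums of products of smooth functions are closed under partial derivatives,
  which makes them a class to which coinduction applies.\<close>

definition sum_of_products ::
    "(((nat \<Rightarrow> real) \<Rightarrow> real) \<times> ((nat \<Rightarrow> real) \<Rightarrow> real)) list \<Rightarrow> (nat \<Rightarrow> real) \<Rightarrow> real" where
  "sum_of_products L = (\<lambda>x. \<Sum>(a, b)\<leftarrow>L. a x * b x)"

lemma sum_of_products_simps:
  "sum_of_products [] = (\<lambda>_. 0)"
  "sum_of_products ((a, b) # L) = (\<lambda>x. a x * b x + sum_of_products L x)"
  by (auto simp: sum_of_products_def)

lemma pdiff_sum_of_products: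
  "\<forall>(a, b)\<in>set L. smooth_fun n a \<and> smooth_fun n b \<Longrightarrow> pdiff_fun n (sum_of_products L)"
proof (induction L)
  case (Cons p L)
  then show ?case
    by (cases p) (simp add: sum_of_products_simps pdiff_fun_add pdiff_fun_mult smooth_fun_imp_pdiff)
qed (simp add: sum_of_products_simps pdiff_fun_const)

lemma partial_sum_of_products:
  "\<forall>(a, b)\<in>set L. smooth_fun n a \<and> smooth_fun n b \<Longrightarrow> i < n \<Longrightarrow>
   partial i (sum_of_products L) =
     sum_of_products (concat (map (\<lambda>(a, b). [(partial i a, b), (a, partial i b)]) L))"
proof (induction L)
  case Nil
  then show ?case by (simp add: sum_of_products_simps partial_const)
next
  case (Cons p L)
  obtain a b where p: "p = (a, b)" by force
  have "partial i (sum_of_products (p # L)) =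
      (\<lambda>x. partial i (\<lambda>x. a x * b x) x + partial i (sum_of_products L) x)"
    unfolding p sum_of_products_simps using Cons.prems p
    by (intro partial_add pdiff_fun_mult pdiff_sum_of_products smooth_fun_imp_pdiff) auto
  also have "\<dots> = (\<lambda>x. partial i a x * b x + a x * partial i b x + partial i (sum_of_products L) x)"
    using Cons.prems p by (subst partial_mult) (auto intro: smooth_fun_imp_pdiff)
  finally show ?case using Cons p by (auto simp: sum_of_products_simps algebra_simps)
qed

lemma smooth_sum_of_products:
  "\<forall>(a, b)\<in>set L. smooth_fun n a \<and> smooth_fun n b \<Longrightarrow> smooth_fun n (sum_of_products L)"
proof (rule smooth_fun_coinduct[where
      K="\<lambda>g. \<exists>L. (\<forall>(a, b)\<in>set L. smooth_fun n a \<and> smooth_fun n b) \<and> g = sum_of_products L"])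
  fix g assume "\<exists>L. (\<forall>(a, b)\<in>set L. smooth_fun n a \<and> smooth_fun n b) \<and> g = sum_of_products L"
  then obtain L where L: "\<forall>(a, b)\<in>set L. smooth_fun n a \<and> smooth_fun n b" "g = sum_of_products L"
    by blast
  have "\<forall>(a, b)\<in>set (concat (map (\<lambda>(a, b). [(partial i a, b), (a, partial i b)]) L)).
      smooth_fun n a \<and> smooth_fun n b" if "i < n" for i
    using L(1) that by (auto intro: smooth_fun_partial)
  then show "pdiff_fun n g \<and> (\<forall>i<n. \<exists>L. (\<forall>(a, b)\<in>set L. smooth_fun n a \<and> smooth_fun n b) \<and>
      partial i g = sum_of_products L)"
    using L pdiff_sum_of_products partial_sum_of_products by blast
qed auto

lemma smooth_mult: "smooth_fun n f \<Longrightarrow> smooth_fun n g \<Longrightarrow> smooth_fun n (\<lambda>x. f x * g x)"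
  using smooth_sum_of_products[of "[(f, g)]" n] by (simp add: sum_of_products_def)

lemma smooth_add: "smooth_fun n f \<Longrightarrow> smooth_fun n g \<Longrightarrow> smooth_fun n (\<lambda>x. f x + g x)"
  using smooth_sum_of_products[of "[(f, \<lambda>_. 1), (g, \<lambda>_. 1)]" n]
  by (simp add: sum_of_products_def smooth_const)

lemma smooth_diff: "smooth_fun n f \<Longrightarrow> smooth_fun n g \<Longrightarrow> smooth_fun n (\<lambda>x. f x - g x)"
  using smooth_sum_of_products[of "[(f, \<lambda>_. 1), (g, \<lambda>_. -1)]" n]
  by (simp add: sum_of_products_def smooth_const)

lemma smooth_sum:
  "(\<And>k. k \<in> I \<Longrightarrow> smooth_fun n (f k)) \<Longrightarrow> smooth_fun n (\<lambda>x. \<Sum>k\<in>I. f k x)"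
  by (induction I rule: infinite_finite_induct) (auto simp: smooth_const smooth_add)

lemma smooth_fun_mono:
  assumes "smooth_fun n f" "n \<le> m"
  shows "smooth_fun m f"
proof (rule smooth_fun_coinduct[where K="smooth_fun n"])
  fix g assume g: "smooth_fun n g"
  then have dep: "depends_on_first n g" and pg: "pdiff_fun n g"
    by (simp_all add: smooth_fun_depends smooth_fun_imp_pdiff)
  have const: "(\<lambda>t. g (x(i := t))) = (\<lambda>_. g x)" if "n \<le> i" for x i
    using dep that unfolding depends_on_first_def by (intro ext) auto
  have depm: "depends_on_first m g"
    using dep assms(2) unfolding depends_on_first_def by auto
  have "pdiff_fun m g"
    unfolding pdiff_fun_def cont_n_iff_continuous[OF depm]
    using pg const depm unfolding pdiff_fun_def cont_n_iff_continuous[OF dep]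
    by (metis differentiable_const not_le)
  moreover have "smooth_fun n (partial i g)" for i
    using g smooth_fun_partial partial_unused_coordinate[OF dep] smooth_const
    by (cases "i < n") auto
  ultimately show "pdiff_fun m g \<and> (\<forall>i<m. smooth_fun n (partial i g))" by blast
qed (rule assms)

section \<open>Hadamard's lemma\<close>

text \<open>A point \<open>z\<close> of \<open>\<real>\<^sup>2\<^sup>n\<close> is read as a pair \<open>(x, y)\<close> of points of \<open>\<real>\<^sup>n\<close>, and the integrand is
  evaluated at \<open>x + c(s) y\<close> with coordinatewise weights \<open>c\<^sub>i(s)\<close>. Each coordinate of that point
  depends on one coordinate of \<open>x\<close> and one of \<open>y\<close> only, so differentiating under the integral
  needs no multivariate chain rule.\<close>

definition weighted_point :: "nat \<Rightarrow> (nat \<Rightarrow> real \<Rightarrow> real) \<Rightarrow> (nat \<Rightarrow> real) \<Rightarrow> real \<Rightarrow> nat \<Rightarrow> real" where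
  "weighted_point n c z s = (\<lambda>i. if i < n then z i + c i s * z (n + i) else 0)"

definition weighted_integral ::
    "nat \<Rightarrow> (real \<Rightarrow> real) \<Rightarrow> (nat \<Rightarrow> real \<Rightarrow> real) \<Rightarrow> ((nat \<Rightarrow> real) \<Rightarrow> real) \<Rightarrow> (nat \<Rightarrow> real) \<Rightarrow> real" where
  "weighted_integral n \<rho> c \<phi> = (\<lambda>z. integral {0..1} (\<lambda>s. \<rho> s * \<phi> (weighted_point n c z s)))"

lemma weighted_point_upd_fst:
  "k < n \<Longrightarrow> weighted_point n c (z(k := t)) s = (weighted_point n c z s)(k := t + c k s * z (n + k))"
  by (auto simp: weighted_point_def fun_eq_iff)

lemma weighted_point_upd_snd:
  "j < n \<Longrightarrow> weighted_point n c (z(n + j := t)) s = (weighted_point n c z s)(j := z j + c j s * t)"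
  by (auto simp: weighted_point_def fun_eq_iff)

lemma continuous_on_integrand:
  assumes "cont_n n \<phi>" "\<And>i. continuous_on S (\<lambda>y. Z y i)" "continuous_on S s"
    "\<And>i. continuous_on UNIV (c i)" "continuous_on UNIV \<rho>"
  shows "continuous_on S (\<lambda>y. \<rho> (s y) * \<phi> (weighted_point n c (Z y) (s y)))"
proof -
  have "continuous_on S (\<lambda>y. weighted_point n c (Z y) (s y) i)" for i
  proof (cases "i < n")
    case True
    have "continuous_on S (\<lambda>y. c i (s y))"
      by (rule continuous_on_compose2[OF assms(4) assms(3)]) auto
    then show ?thesis using True assms(2) by (simp add: weighted_point_def) (intro continuous_intros)
  qed (simp add: weighted_point_def)
  then have "continuous_on S (\<lambda>y. \<phi> (weighted_point n c (Z y) (s y)))"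
    by (rule cont_n_continuous_on[OF assms(1)])
  moreover have "continuous_on S (\<lambda>y. \<rho> (s y))"
    by (rule continuous_on_compose2[OF assms(5) assms(3)]) auto
  ultimately show ?thesis by (intro continuous_intros)
qed

lemma has_derivative_integrand_fst:
  assumes "pdiff_fun n \<phi>" "k < n"
  shows "((\<lambda>t. \<rho> s * \<phi> (weighted_point n c (z(k := t)) s)) has_real_derivative
           \<rho> s * partial k \<phi> (weighted_point n c (z(k := t)) s)) (at t)"
proof -
  define v where "v = weighted_point n c z s"
  define a where "a = c k s * z (n + k)"
  have "((\<lambda>\<tau>. \<phi> (v(k := \<tau>))) has_real_derivative partial k \<phi> (v(k := t + a))) (at (t + a))"
    by (rule pdiff_has_partial[OF assms])
  then have "((\<lambda>t. \<phi> (v(k := t + a))) has_real_derivative partial k \<phi> (v(k := t + a))) (at t)"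
    by (simp add: DERIV_shift)
  then show ?thesis
    unfolding weighted_point_upd_fst[OF assms(2)] v_def a_def by (intro DERIV_cmult) simp
qed

lemma has_derivative_integrand_snd:
  assumes "pdiff_fun n \<phi>" "j < n"
  shows "((\<lambda>t. \<rho> s * \<phi> (weighted_point n c (z(n + j := t)) s)) has_real_derivative
           (\<rho> s * c j s) * partial j \<phi> (weighted_point n c (z(n + j := t)) s)) (at t)"
proof -
  define v where "v = weighted_point n c z s"
  have "((\<lambda>\<tau>. \<phi> (v(j := \<tau>))) has_real_derivative partial j \<phi> (v(j := z j + c j s * t)))
      (at (z j + c j s * t))"
    by (rule pdiff_has_partial[OF assms])
  moreover have "((\<lambda>t. z j + c j s * t) has_real_derivative c j s) (at t)"
    by (auto intro!: derivative_eq_intros)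
  ultimately have "((\<lambda>t. \<phi> (v(j := z j + c j s * t))) has_real_derivative
      partial j \<phi> (v(j := z j + c j s * t)) * c j s) (at t)"
    by (rule DERIV_chain2)
  then show ?thesis
    unfolding weighted_point_upd_snd[OF assms(2)] v_def
    by (drule_tac DERIV_cmult[where c="\<rho> s"]) (simp add: algebra_simps)
qed

lemma has_derivative_weighted_integral:
  assumes \<phi>: "smooth_fun n \<phi>" and \<rho>: "continuous_on UNIV \<rho>" and c: "\<And>i. continuous_on UNIV (c i)"
    and \<psi>: "pdiff_fun n \<psi>" and \<sigma>: "continuous_on UNIV \<sigma>"
    and der: "\<And>t s. ((\<lambda>t. \<rho> s * \<phi> (weighted_point n c (z(k := t)) s)) has_real_derivative
           \<sigma> s * \<psi> (weighted_point n c (z(k := t)) s)) (at t)"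
  shows "((\<lambda>t. weighted_integral n \<rho> c \<phi> (z(k := t))) has_real_derivative
      weighted_integral n \<sigma> c \<psi> (z(k := t))) (at t)"
proof -
  have c\<phi>: "cont_n n \<phi>" using smooth_fun_imp_pdiff[OF \<phi>] unfolding pdiff_fun_def by blast
  have c\<psi>: "cont_n n \<psi>" using \<psi> unfolding pdiff_fun_def by blast
  have "((\<lambda>t. integral (cbox 0 1) (\<lambda>s. \<rho> s * \<phi> (weighted_point n c (z(k := t)) s)))
      has_field_derivative integral (cbox 0 1) (\<lambda>s. \<sigma> s * \<psi> (weighted_point n c (z(k := t)) s)))
      (at t within UNIV)"
  proof (rule leibniz_rule_field_derivative[where fx="\<lambda>t s. \<sigma> s * \<psi> (weighted_point n c (z(k := t)) s)"])
    show "((\<lambda>x. \<rho> s * \<phi> (weighted_point n c (z(k := x)) s)) has_field_derivative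
        \<sigma> s * \<psi> (weighted_point n c (z(k := x)) s)) (at x within UNIV)" for x s
      using der by simp
  next
    fix x :: real
    have "continuous_on {0..1} (\<lambda>s. \<rho> (id s) * \<phi> (weighted_point n c ((\<lambda>_. z(k := x)) s) (id s)))"
      by (rule continuous_on_integrand[OF c\<phi> _ _ c \<rho>]) (auto intro!: continuous_intros)
    then show "(\<lambda>s. \<rho> s * \<phi> (weighted_point n c (z(k := x)) s)) integrable_on cbox 0 1"
      by (simp add: integrable_continuous_interval)
  next
    have "continuous_on (UNIV \<times> cbox 0 1)
        (\<lambda>p. \<sigma> (snd p) * \<psi> (weighted_point n c ((\<lambda>p. z(k := fst p)) p) (snd p)))"
    proof (rule continuous_on_integrand[OF c\<psi> _ _ c \<sigma>])
      show "continuous_on (UNIV \<times> cbox 0 1) (\<lambda>p. (z(k := fst p)) i)" for i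
        by (cases "i = k") (auto intro!: continuous_intros)
    qed (auto intro!: continuous_intros)
    then show "continuous_on (UNIV \<times> cbox 0 1) (\<lambda>(x, t). \<sigma> t * \<psi> (weighted_point n c (z(k := x)) t))"
      by (simp add: case_prod_beta)
  qed auto
  then show ?thesis unfolding weighted_integral_def by simp
qed

lemma continuous_on_weighted_integral:
  assumes \<phi>: "cont_n n \<phi>" and \<rho>: "continuous_on UNIV \<rho>" and c: "\<And>i. continuous_on UNIV (c i)"
  shows "continuous_on UNIV (weighted_integral n \<rho> c \<phi>)"
  unfolding continuous_on_iff
proof (intro ballI allI impI)
  fix z0 :: "nat \<Rightarrow> real" and e :: real assume "e > 0"
  define F where "F = (\<lambda>p::(nat \<Rightarrow> real) \<times> real. \<rho> (snd p) * \<phi> (weighted_point n c (fst p) (snd p)))"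
  have "continuous_on (UNIV \<times> cbox 0 1) F"
  proof (unfold F_def, rule continuous_on_integrand[OF \<phi> _ _ c \<rho>])
    show "continuous_on (UNIV \<times> cbox 0 1) (\<lambda>x. fst x i)" for i
      using continuous_on_compose2[OF continuous_on_product_coordinates[of i]
          continuous_on_fst[OF continuous_on_id]]
      by auto
  qed (auto intro!: continuous_intros)
  then obtain X0 where X0: "z0 \<in> X0" "open X0"
      "\<forall>x\<in>X0 \<inter> UNIV. \<forall>t\<in>cbox 0 1. dist (F (x, t)) (F (z0, t)) \<le> e/2"
    using continuous_on_prod_compactE[of UNIV "cbox 0 1" F z0 "e/2"] \<open>e > 0\<close> by auto
  obtain r where r: "r > 0" "ball z0 r \<subseteq> X0" using X0 openE by blast
  have int: "(\<lambda>s. F (z, s)) integrable_on cbox 0 1" for z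
  proof -
    have "continuous_on (cbox 0 1) (\<lambda>s. F (z, s))"
      using continuous_on_integrand[OF \<phi> _ _ c \<rho>, where Z="\<lambda>_. z" and s=id and S="cbox 0 1"]
      unfolding F_def by auto
    then show ?thesis by (rule integrable_continuous)
  qed
  have "dist (weighted_integral n \<rho> c \<phi> z) (weighted_integral n \<rho> c \<phi> z0) < e" if "dist z z0 < r" for z
  proof -
    have "z \<in> X0" using that r by (auto simp: dist_commute)
    have "weighted_integral n \<rho> c \<phi> z - weighted_integral n \<rho> c \<phi> z0 =
        integral (cbox 0 1) (\<lambda>s. F (z, s) - F (z0, s))"
      unfolding weighted_integral_def F_def using int[of z] int[of z0] by (simp add: integral_diff F_def)
    moreover have "norm (integral (cbox 0 1) (\<lambda>s. F (z, s) - F (z0, s))) \<le>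
        e/2 * Henstock_Kurzweil_Integration.content (cbox (0::real) 1)"
      by (rule has_integral_bound[where f="\<lambda>s. F (z, s) - F (z0, s)"])
         (use \<open>e > 0\<close> X0(3) \<open>z \<in> X0\<close> int in \<open>auto simp: dist_norm intro!: integrable_integral integrable_diff\<close>)
    ultimately show ?thesis using \<open>e > 0\<close> by (simp add: dist_real_def)
  qed
  then show "\<exists>d>0. \<forall>z\<in>UNIV. dist z z0 < d \<longrightarrow>
      dist (weighted_integral n \<rho> c \<phi> z) (weighted_integral n \<rho> c \<phi> z0) < e"
    using r by blast
qed

lemma depends_on_first_weighted_integral:
  "depends_on_first (2 * n) (weighted_integral n \<rho> c \<phi>)"
proof -
  have "weighted_point n c x s = weighted_point n c y s" if "\<forall>i<2 * n. x i = y i" for x y s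
    using that by (auto simp: weighted_point_def fun_eq_iff)
  then show ?thesis
    unfolding depends_on_first_def weighted_integral_def
    by (intro allI impI arg_cong[where f="integral {0..1}"] ext) (metis (no_types))
qed

text \<open>Each partial derivative of a weighted integral is again one, with \<open>\<phi>\<close> replaced by a partial
  derivative and \<open>\<rho>\<close> possibly multiplied by a weight; this is the invariant of the coinduction.\<close>

lemma partial_weighted_integral:
  assumes \<phi>: "smooth_fun n \<phi>" and \<rho>: "continuous_on UNIV \<rho>" and c: "\<And>i. continuous_on UNIV (c i)"
    and k: "k < 2 * n"
  obtains \<rho>' \<phi>' where "smooth_fun n \<phi>'" "continuous_on UNIV \<rho>'"
    "\<And>x t. ((\<lambda>\<tau>. weighted_integral n \<rho> c \<phi> (x(k := \<tau>))) has_real_derivative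
              weighted_integral n \<rho>' c \<phi>' (x(k := t))) (at t)"
proof (cases "k < n")
  case True
  have sm: "smooth_fun n (partial k \<phi>)" by (rule smooth_fun_partial[OF \<phi> True])
  show ?thesis
    by (rule that[OF sm \<rho>]) (intro has_derivative_weighted_integral[OF \<phi> \<rho> c] smooth_fun_imp_pdiff sm
        has_derivative_integrand_fst[OF smooth_fun_imp_pdiff[OF \<phi>] True] \<rho>)
next
  case False
  then obtain j where j: "k = n + j" "j < n" using k by (metis add_diff_inverse_nat less_diff_conv2 mult_2 not_less)
  have sm: "smooth_fun n (partial j \<phi>)" by (rule smooth_fun_partial[OF \<phi> j(2)])
  have w: "continuous_on UNIV (\<lambda>s. \<rho> s * c j s)" using \<rho> c by (intro continuous_intros)
  have "((\<lambda>\<tau>. weighted_integral n \<rho> c \<phi> (x(n + j := \<tau>))) has_real_derivative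
      weighted_integral n (\<lambda>s. \<rho> s * c j s) c (partial j \<phi>) (x(n + j := t))) (at t)" for x t
    by (rule has_derivative_weighted_integral[OF \<phi> \<rho> c smooth_fun_imp_pdiff[OF sm] w])
       (rule has_derivative_integrand_snd[OF smooth_fun_imp_pdiff[OF \<phi>] j(2)])
  then show ?thesis using that[OF sm w] j(1) by blast
qed

lemma smooth_weighted_integral:
  assumes "smooth_fun n \<phi>" "continuous_on UNIV \<rho>" "\<And>i. continuous_on UNIV (c i)"
  shows "smooth_fun (2 * n) (weighted_integral n \<rho> c \<phi>)"
proof (rule smooth_fun_coinduct[where
      K="\<lambda>g. \<exists>\<rho> \<phi>. smooth_fun n \<phi> \<and> continuous_on UNIV \<rho> \<and> g = weighted_integral n \<rho> c \<phi>"])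
  fix g assume "\<exists>\<rho> \<phi>. smooth_fun n \<phi> \<and> continuous_on UNIV \<rho> \<and> g = weighted_integral n \<rho> c \<phi>"
  then obtain \<rho> \<phi> where \<phi>: "smooth_fun n \<phi>" and \<rho>: "continuous_on UNIV \<rho>"
    and g: "g = weighted_integral n \<rho> c \<phi>"
    by blast
  have dep: "depends_on_first (2 * n) g"
    unfolding g by (rule depends_on_first_weighted_integral)
  have "cont_n n \<phi>" using smooth_fun_imp_pdiff[OF \<phi>] unfolding pdiff_fun_def by blast
  then have "continuous_on UNIV g"
    unfolding g by (rule continuous_on_weighted_integral[OF _ \<rho> assms(3)])
  then have "cont_n (2 * n) g" using cont_n_iff_continuous[OF dep] by blast
  moreover have "(\<lambda>t. g (x(k := t))) differentiable at (x k) \<and>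
      (\<exists>\<rho>' \<phi>'. smooth_fun n \<phi>' \<and> continuous_on UNIV \<rho>' \<and> partial k g = weighted_integral n \<rho>' c \<phi>')"
    if k: "k < 2 * n" for k x
  proof -
    obtain \<rho>' \<phi>' where "smooth_fun n \<phi>'" "continuous_on UNIV \<rho>'" and der:
      "\<And>x t. ((\<lambda>\<tau>. g (x(k := \<tau>))) has_real_derivative weighted_integral n \<rho>' c \<phi>' (x(k := t))) (at t)"
      using partial_weighted_integral[where c=c, OF \<phi> \<rho> assms(3) k] unfolding g by blast
    moreover have "partial k g = weighted_integral n \<rho>' c \<phi>'" using der by (rule partial_eqI)
    moreover have "(\<lambda>t. g (x(k := t))) differentiable at (x k)"
      using der[of x "x k"] unfolding real_differentiable_def by blast
    ultimately show ?thesis by blast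
  qed
  ultimately show "pdiff_fun (2 * n) g \<and> (\<forall>k<2 * n. \<exists>\<rho>' \<phi>'. smooth_fun n \<phi>' \<and>
      continuous_on UNIV \<rho>' \<and> partial k g = weighted_integral n \<rho>' c \<phi>')"
    using dep unfolding pdiff_fun_def by blast
qed (use assms in blast)

text \<open>Hadamard's lemma: the coefficient \<open>h\<^sub>j(x, y)\<close> integrates \<open>\<partial>\<^sub>jf\<close> along the \<open>j\<close>-th edge of the
  staircase path from \<open>x\<close> to \<open>x + y\<close>, which changes the coordinates one at a time.\<close>

definition staircase_weight :: "nat \<Rightarrow> nat \<Rightarrow> real \<Rightarrow> real" where
  "staircase_weight j i s = (if i < j then 1 else if i = j then s else 0)"

definition hadamard_coeff :: "nat \<Rightarrow> ((nat \<Rightarrow> real) \<Rightarrow> real) \<Rightarrow> nat \<Rightarrow> (nat \<Rightarrow> real) \<Rightarrow> real" where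
  "hadamard_coeff n f j = weighted_integral n (\<lambda>_. 1) (staircase_weight j) (partial j f)"

lemma smooth_hadamard_coeff:
  assumes "smooth_fun n f" "j < n"
  shows "smooth_fun (2 * n) (hadamard_coeff n f j)"
  unfolding hadamard_coeff_def
proof (rule smooth_weighted_integral)
  show "continuous_on UNIV (staircase_weight j i)" for i
    unfolding staircase_weight_def by (cases "i < j"; cases "i = j") (auto intro!: continuous_intros)
qed (use assms in \<open>auto intro!: smooth_fun_partial\<close>)

definition staircase_point :: "nat \<Rightarrow> (nat \<Rightarrow> real) \<Rightarrow> nat \<Rightarrow> nat \<Rightarrow> real" where
  "staircase_point n z j = (\<lambda>i. if i < n then z i + (if i < j then z (n + i) else 0) else 0)"

lemma hadamard_step:
  assumes f: "smooth_fun n f" and j: "j < n"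
  shows "f (staircase_point n z (Suc j)) - f (staircase_point n z j) = z (n + j) * hadamard_coeff n f j z"
proof -
  define b where "b = z (n + j)"
  define G where "G s = f ((staircase_point n z j)(j := z j + s * b))" for s
  have path: "weighted_point n (staircase_weight j) z s = (staircase_point n z j)(j := z j + s * b)" for s
    using j by (auto simp: weighted_point_def staircase_weight_def staircase_point_def b_def fun_eq_iff)
  have der: "(G has_real_derivative partial j f ((staircase_point n z j)(j := z j + s * b)) * b) (at s)" for s
  proof -
    have "((\<lambda>\<tau>. f ((staircase_point n z j)(j := \<tau>))) has_real_derivative
        partial j f ((staircase_point n z j)(j := z j + s * b))) (at (z j + s * b))"
      by (rule pdiff_has_partial[OF smooth_fun_imp_pdiff[OF f] j])
    moreover have "((\<lambda>s. z j + s * b) has_real_derivative b) (at s)"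
      by (auto intro!: derivative_eq_intros)
    ultimately show ?thesis unfolding G_def by (rule DERIV_chain2)
  qed
  have "((\<lambda>s. partial j f ((staircase_point n z j)(j := z j + s * b)) * b) has_integral G 1 - G 0) {0..1}"
    by (rule fundamental_theorem_of_calculus)
       (auto intro!: has_real_derivative_iff_has_vector_derivative[THEN iffD1] DERIV_subset[OF der])
  then have "integral {0..1} (\<lambda>s. partial j f ((staircase_point n z j)(j := z j + s * b)) * b) = G 1 - G 0"
    by (rule integral_unique)
  moreover have "integral {0..1} (\<lambda>s. partial j f ((staircase_point n z j)(j := z j + s * b)) * b) =
      b * hadamard_coeff n f j z"
    unfolding hadamard_coeff_def weighted_integral_def path
    using integral_mult_right[of "{0..1::real}" b] by (simp add: mult.commute)
  moreover have "G 1 = f (staircase_point n z (Suc j))"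
    unfolding G_def by (rule arg_cong[where f=f]) (auto simp: staircase_point_def b_def fun_eq_iff j)
  moreover have "G 0 = f (staircase_point n z j)"
    unfolding G_def by (rule arg_cong[where f=f]) (auto simp: staircase_point_def fun_eq_iff j)
  ultimately show ?thesis by (simp add: b_def)
qed

lemma hadamard:
  assumes f: "smooth_fun n f"
  shows "f (\<lambda>i. z i + z (n + i)) = f z + (\<Sum>j<n. z (n + j) * hadamard_coeff n f j z)"
proof -
  have dep: "depends_on_first n f" by (rule smooth_fun_depends[OF f])
  have start: "f (staircase_point n z 0) = f z"
    using dep unfolding depends_on_first_def staircase_point_def by auto
  have stop: "f (staircase_point n z n) = f (\<lambda>i. z i + z (n + i))"
    using dep unfolding depends_on_first_def staircase_point_def by auto
  have "f (staircase_point n z n) - f (staircase_point n z 0) =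
      (\<Sum>j<n. f (staircase_point n z (Suc j)) - f (staircase_point n z j))"
    by (rule sum_lessThan_telescope[symmetric])
  also have "\<dots> = (\<Sum>j<n. z (n + j) * hadamard_coeff n f j z)"
    by (rule sum.cong) (auto simp: hadamard_step[OF f])
  finally show ?thesis using start stop by simp
qed

text \<open>For \<open>v = (x, y, e) \<in> \<real>\<^sup>2\<^sup>n\<^sup>+\<^sup>1\<close>, the coordinates \<open>z = (x, e y, y, e)\<close> turn the Hadamard expansion
  of \<open>f (x + e y)\<close> into the smooth function \<open>f z + z\<^sub>3\<^sub>n \<cdot> hadamard_remainder n f z\<close> of them.\<close>

definition hadamard_coords :: "nat \<Rightarrow> nat \<Rightarrow> (nat \<Rightarrow> real) \<Rightarrow> real" where
  "hadamard_coords n i v = (if i < n then v i else if i < 2 * n then v (2 * n) * v i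
     else if i < 3 * n then v (i - n) else v (2 * n))"

definition hadamard_remainder :: "nat \<Rightarrow> ((nat \<Rightarrow> real) \<Rightarrow> real) \<Rightarrow> (nat \<Rightarrow> real) \<Rightarrow> real" where
  "hadamard_remainder n f z = (\<Sum>j<n. z (2 * n + j) * hadamard_coeff n f j z)"

lemma hadamard_in_coords:
  assumes f: "smooth_fun n f"
  shows "f (\<lambda>j. v j + v (2 * n) * v (n + j)) =
    f (\<lambda>i. hadamard_coords n i v) + hadamard_coords n (3 * n) v * hadamard_remainder n f (\<lambda>i. hadamard_coords n i v)"
proof -
  define z where "z = (\<lambda>i. hadamard_coords n i v)"
  have "f (\<lambda>j. v j + v (2 * n) * v (n + j)) = f (\<lambda>i. z i + z (n + i))"
    using smooth_fun_depends[OF f] unfolding depends_on_first_def by (auto simp: z_def hadamard_coords_def)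
  also have "\<dots> = f z + (\<Sum>j<n. z (n + j) * hadamard_coeff n f j z)"
    by (rule hadamard[OF f])
  also have "(\<Sum>j<n. z (n + j) * hadamard_coeff n f j z) = z (3 * n) * hadamard_remainder n f z"
    unfolding hadamard_remainder_def sum_distrib_left
    by (rule sum.cong) (auto simp: z_def hadamard_coords_def)
  finally show ?thesis by (simp add: z_def)
qed

lemma hadamard_coords_fst: "i < n \<Longrightarrow> hadamard_coords n i = (\<lambda>v. v i)"
  by (simp add: hadamard_coords_def fun_eq_iff)

lemma hadamard_coords_last: "hadamard_coords n (3 * n) = (\<lambda>v. v (2 * n))"
  by (simp add: hadamard_coords_def fun_eq_iff)

lemma smooth_hadamard_coords: "smooth_fun (Suc (2 * n)) (hadamard_coords n i)"
  unfolding hadamard_coords_def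
  by (cases "i < n"; cases "i < 2 * n"; cases "i < 3 * n") (simp_all add: smooth_proj smooth_mult)

lemma smooth_hadamard_remainder:
  assumes "smooth_fun n f"
  shows "smooth_fun (Suc (3 * n)) (hadamard_remainder n f)"
proof -
  have "smooth_fun (Suc (3 * n)) (hadamard_coeff n f j)" if "j < n" for j
    using smooth_hadamard_coeff[OF assms that] by (rule smooth_fun_mono) simp
  then show ?thesis
    unfolding hadamard_remainder_def by (intro smooth_sum smooth_mult smooth_proj) auto
qed

section \<open>\<open>C\<^sup>\<infinity>\<close>-rings\<close>

lemma cinf_ring_closed:
  assumes "cinf_ring X \<Psi>" "smooth_fun n f" "\<And>i. i < n \<Longrightarrow> a i \<in> X"
  shows "\<Psi> n f a \<in> X"
proof -
  have "\<forall>n f a. smooth_fun n f \<longrightarrow> (\<forall>i<n. a i \<in> X) \<longrightarrow> \<Psi> n f a \<in> X"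
    using assms(1) unfolding cinf_ring_def by (elim conjE)
  then show ?thesis using assms(2,3) by blast
qed

lemma cinf_ring_cong:
  assumes "cinf_ring X \<Psi>" "smooth_fun n f" "\<And>i. i < n \<Longrightarrow> a i = b i"
  shows "\<Psi> n f a = \<Psi> n f b"
proof -
  have "\<forall>n f a b. smooth_fun n f \<longrightarrow> (\<forall>i<n. a i = b i) \<longrightarrow> \<Psi> n f a = \<Psi> n f b"
    using assms(1) unfolding cinf_ring_def by (elim conjE)
  then show ?thesis using assms(2,3) by blast
qed

lemma cinf_ring_proj:
  assumes "cinf_ring X \<Psi>" "i < n" "\<And>j. j < n \<Longrightarrow> a j \<in> X"
  shows "\<Psi> n (\<lambda>x. x i) a = a i"
proof -
  have "\<forall>n i a. i < n \<longrightarrow> (\<forall>j<n. a j \<in> X) \<longrightarrow> \<Psi> n (\<lambda>x. x i) a = a i"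
    using assms(1) unfolding cinf_ring_def by (elim conjE)
  then show ?thesis using assms(2,3) by blast
qed

lemma cinf_ring_comp:
  assumes "cinf_ring X \<Psi>" "smooth_fun m f" "\<And>j. j < m \<Longrightarrow> smooth_fun n (g j)"
    "\<And>i. i < n \<Longrightarrow> a i \<in> X"
  shows "\<Psi> n (\<lambda>x. f (\<lambda>j. g j x)) a = \<Psi> m f (\<lambda>j. \<Psi> n (g j) a)"
proof -
  have "\<forall>n m f g a. smooth_fun m f \<longrightarrow> (\<forall>j<m. smooth_fun n (g j)) \<longrightarrow> (\<forall>i<n. a i \<in> X) \<longrightarrow>
      \<Psi> n (\<lambda>x. f (\<lambda>j. g j x)) a = \<Psi> m f (\<lambda>j. \<Psi> n (g j) a)"
    using assms(1) unfolding cinf_ring_def by (elim conjE)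
  then show ?thesis using assms(2-4) by blast
qed

lemma cinf_ring_real: "cinf_ring UNIV real_cinf"
  unfolding cinf_ring_def real_cinf_def
proof (intro conjI allI impI)
  show "f a = f b" if "smooth_fun n f" "\<forall>i<n. a i = b i" for n f and a b :: "nat \<Rightarrow> real"
    using that smooth_fun_depends unfolding depends_on_first_def by blast
qed auto

lemma cinf_ring_subring:
  assumes P: "cinf_ring P \<Theta>" and "S \<subseteq> P" and S: "cinf_closed \<Theta> S"
  shows "cinf_ring S \<Theta>"
  unfolding cinf_ring_def
proof (intro conjI allI impI)
  fix n f a assume "smooth_fun n f" "\<forall>i<n. a i \<in> S"
  then show "\<Theta> n f a \<in> S" using S unfolding cinf_closed_def by blast
next
  fix n f a b assume "smooth_fun n f" "\<forall>i<n. (a i :: 'a) = b i"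
  then show "\<Theta> n f a = \<Theta> n f b" using cinf_ring_cong[OF P] by blast
next
  fix n i :: nat and a assume "i < n" "\<forall>j<n. a j \<in> S"
  then show "\<Theta> n (\<lambda>x. x i) a = a i" using cinf_ring_proj[OF P] \<open>S \<subseteq> P\<close> by blast
next
  fix n m f g a assume "smooth_fun m f" "\<forall>j<m. smooth_fun n (g j)" "\<forall>i<n. a i \<in> S"
  then show "\<Theta> n (\<lambda>x. f (\<lambda>j. g j x)) a = \<Theta> m f (\<lambda>j. \<Theta> n (g j) a)"
    using cinf_ring_comp[OF P] \<open>S \<subseteq> P\<close> by blast
qed

lemma cinf_eval_mono:
  assumes X: "cinf_ring X \<Psi>" and f: "smooth_fun n f" and "n \<le> m" and a: "\<And>i. i < m \<Longrightarrow> a i \<in> X"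
  shows "\<Psi> m f a = \<Psi> n f a"
proof -
  have "\<Psi> m (\<lambda>x. f (\<lambda>j. x j)) a = \<Psi> n f (\<lambda>j. \<Psi> m (\<lambda>x. x j) a)"
    using \<open>n \<le> m\<close> by (intro cinf_ring_comp[OF X f] smooth_proj a) auto
  also have "\<dots> = \<Psi> n f a"
    using \<open>n \<le> m\<close> by (intro cinf_ring_cong[OF X f] cinf_ring_proj[OF X] a) auto
  finally show ?thesis by simp
qed

lemma cinf_eval_comp_list:
  assumes X: "cinf_ring X \<Psi>" and V: "smooth_fun m V" and len: "length Fs = m"
    and Fs: "\<forall>F\<in>set Fs. smooth_fun k F" and t: "\<And>i. i < k \<Longrightarrow> t i \<in> X"
  shows "\<Psi> k (\<lambda>x. V (\<lambda>j. map (\<lambda>F. F x) Fs ! j)) t = \<Psi> m V (\<lambda>j. map (\<lambda>F. \<Psi> k F t) Fs ! j)"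
proof -
  have "(\<lambda>x. V (\<lambda>j. map (\<lambda>F. F x) Fs ! j)) = (\<lambda>x. V (\<lambda>j. (Fs ! j) x))"
    using smooth_fun_depends[OF V] len unfolding depends_on_first_def by (intro ext) auto
  then have "\<Psi> k (\<lambda>x. V (\<lambda>j. map (\<lambda>F. F x) Fs ! j)) t = \<Psi> m V (\<lambda>j. \<Psi> k (Fs ! j) t)"
    using Fs len by (simp add: cinf_ring_comp[OF X V _ t])
  also have "\<dots> = \<Psi> m V (\<lambda>j. map (\<lambda>F. \<Psi> k F t) Fs ! j)"
    using len by (intro cinf_ring_cong[OF X V]) simp
  finally show ?thesis .
qed

lemma cinf_eval_subst_list:
  assumes X: "cinf_ring X \<Psi>" and V: "smooth_fun m V" and len: "length Fs = m"
    and Fs: "\<forall>F\<in>set Fs. smooth_fun k F" and Gs: "\<forall>G\<in>set Gs. smooth_fun k G"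
    and t: "\<And>i. i < k \<Longrightarrow> t i \<in> X" and eq: "list_all2 (\<lambda>F G. \<Psi> k F t = \<Psi> k G t) Fs Gs"
  shows "\<Psi> k (\<lambda>x. V (\<lambda>j. map (\<lambda>F. F x) Fs ! j)) t = \<Psi> k (\<lambda>x. V (\<lambda>j. map (\<lambda>G. G x) Gs ! j)) t"
proof -
  have "map (\<lambda>F. \<Psi> k F t) Fs = map (\<lambda>G. \<Psi> k G t) Gs" and "length Gs = m"
    using eq len by (auto simp: list_all2_conv_all_nth intro: nth_equalityI)
  then show ?thesis
    using cinf_eval_comp_list[OF X V len Fs t] cinf_eval_comp_list[OF X V _ Gs t] by simp
qed

lemma cinf_hom_mem: "cinf_hom A \<Phi> B \<Psi> h \<Longrightarrow> x \<in> A \<Longrightarrow> h x \<in> B"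
  unfolding cinf_hom_def by blast

lemma cinf_hom_op:
  "cinf_hom A \<Phi> B \<Psi> h \<Longrightarrow> smooth_fun n f \<Longrightarrow> (\<And>i. i < n \<Longrightarrow> a i \<in> A) \<Longrightarrow>
   h (\<Phi> n f a) = \<Psi> n f (h \<circ> a)"
  unfolding cinf_hom_def by blast

lemma cinf_hom_comp:
  assumes "cinf_hom A \<Phi> B \<Psi> h" "cinf_hom B \<Psi> C \<Xi> k"
  shows "cinf_hom A \<Phi> C \<Xi> (k \<circ> h)"
  using assms unfolding cinf_hom_def by (simp add: o_assoc)

lemma cinf_hom_inclusion: "S \<subseteq> P \<Longrightarrow> cinf_hom S \<Theta> P \<Theta> id"
  unfolding cinf_hom_def by auto

lemma cinf_hom_restrict: "cinf_hom A \<Phi> P \<Theta> h \<Longrightarrow> h ` A \<subseteq> S \<Longrightarrow> cinf_hom A \<Phi> S \<Theta> h"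
  unfolding cinf_hom_def by auto

definition cinf_const :: "'a cinf_ops \<Rightarrow> real \<Rightarrow> 'a" where
  "cinf_const \<Psi> r = \<Psi> 0 (\<lambda>_. r) (\<lambda>_. undefined)"

lemma cinf_const_mem: "cinf_ring X \<Psi> \<Longrightarrow> cinf_const \<Psi> r \<in> X"
  unfolding cinf_const_def by (rule cinf_ring_closed[OF _ smooth_const]) auto

lemma cinf_eval_const:
  assumes X: "cinf_ring X \<Psi>" and t: "\<And>i. i < k \<Longrightarrow> t i \<in> X"
  shows "\<Psi> k (\<lambda>_. r) t = cinf_const \<Psi> r"
proof -
  have "\<Psi> k (\<lambda>x. (\<lambda>_. r) (\<lambda>j. (\<lambda>_ _. 0) j x)) t = \<Psi> 0 (\<lambda>_. r) (\<lambda>j. \<Psi> k ((\<lambda>_ _. 0) j) t)"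
    by (rule cinf_ring_comp[OF X smooth_const]) (auto intro: t)
  also have "\<dots> = cinf_const \<Psi> r"
    unfolding cinf_const_def by (rule cinf_ring_cong[OF X smooth_const]) auto
  finally show ?thesis by simp
qed

lemma cinf_hom_const:
  assumes "cinf_ring B \<Psi>" "cinf_hom A \<Phi> B \<Psi> h"
  shows "h (cinf_const \<Phi> r) = cinf_const \<Psi> r"
  unfolding cinf_const_def
  using cinf_hom_op[OF assms(2) smooth_const] cinf_eval_const[OF assms(1), of 0]
  by (simp add: cinf_const_def)

lemma real_cinf_const [simp]: "cinf_const real_cinf r = r"
  by (simp add: cinf_const_def real_cinf_def)

definition cinf_add_mul :: "'a cinf_ops \<Rightarrow> 'a \<Rightarrow> 'a \<Rightarrow> 'a \<Rightarrow> 'a" where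
  "cinf_add_mul \<Psi> a b c = \<Psi> 3 (\<lambda>v. v 0 + v 1 * v 2) (\<lambda>j. [a, b, c] ! j)"

lemma smooth_add_mul: "smooth_fun 3 (\<lambda>v. v 0 + v 1 * v 2)"
  by (intro smooth_add smooth_mult smooth_proj) auto

lemma smooth_mul: "smooth_fun 2 (\<lambda>v. v 0 * v 1)"
  by (intro smooth_mult smooth_proj) auto

lemma cinf_add_mul_eval:
  assumes X: "cinf_ring X \<Psi>" and "smooth_fun k F" "smooth_fun k G" "smooth_fun k H"
    and t: "\<And>i. i < k \<Longrightarrow> t i \<in> X"
  shows "cinf_add_mul \<Psi> (\<Psi> k F t) (\<Psi> k G t) (\<Psi> k H t) = \<Psi> k (\<lambda>x. F x + G x * H x) t"
  using cinf_eval_comp_list[OF X smooth_add_mul _ _ t, of "[F, G, H]"] assms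
  by (simp add: cinf_add_mul_def)

lemma cinf_mul_eval:
  assumes X: "cinf_ring X \<Psi>" and "smooth_fun k F" "smooth_fun k G"
    and t: "\<And>i. i < k \<Longrightarrow> t i \<in> X"
  shows "cinf_mul \<Psi> (\<Psi> k F t) (\<Psi> k G t) = \<Psi> k (\<lambda>x. F x * G x) t"
proof -
  have "cinf_mul \<Psi> (\<Psi> k F t) (\<Psi> k G t) = \<Psi> 2 (\<lambda>v. v 0 * v 1) (\<lambda>j. [\<Psi> k F t, \<Psi> k G t] ! j)"
    unfolding cinf_mul_def by (rule cinf_ring_cong[OF X smooth_mul]) (auto simp: less_2_cases_iff)
  then show ?thesis
    using cinf_eval_comp_list[OF X smooth_mul _ _ t, of "[F, G]"] assms by simp
qed

lemma cinf_eval_hadamard: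
  assumes X: "cinf_ring X \<Psi>" and f: "smooth_fun n f" and t: "\<And>i. i < Suc (2 * n) \<Longrightarrow> t i \<in> X"
  shows "\<Psi> (Suc (2 * n)) (\<lambda>v. f (\<lambda>j. v j + v (2 * n) * v (n + j))) t =
    cinf_add_mul \<Psi> (\<Psi> n f t) (t (2 * n))
      (\<Psi> (Suc (3 * n)) (hadamard_remainder n f) (\<lambda>i. \<Psi> (Suc (2 * n)) (hadamard_coords n i) t))"
proof -
  define k where "k = Suc (2 * n)"
  define m where "m = Suc (3 * n)"
  define W where "W = hadamard_remainder n f"
  define d where "d i = \<Psi> k (hadamard_coords n i) t" for i
  have Y: "smooth_fun k (hadamard_coords n i)" for i unfolding k_def by (rule smooth_hadamard_coords)
  have W: "smooth_fun m W" unfolding W_def m_def by (rule smooth_hadamard_remainder[OF f])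
  have fm: "smooth_fun m f" using f by (rule smooth_fun_mono) (simp add: m_def)
  have d: "d i \<in> X" for i unfolding d_def by (rule cinf_ring_closed[OF X Y t[folded k_def]])
  have proj: "\<Psi> k (\<lambda>v. v i) t = t i" if "i < k" for i
    using that by (intro cinf_ring_proj[OF X]) (simp_all add: t k_def)
  have "\<Psi> k (\<lambda>v. f (\<lambda>j. v j + v (2 * n) * v (n + j))) t =
      \<Psi> k (\<lambda>v. (\<lambda>z. f z + z (3 * n) * W z) (\<lambda>i. hadamard_coords n i v)) t"
    by (simp add: hadamard_in_coords[OF f] W_def)
  also have "\<dots> = \<Psi> m (\<lambda>z. f z + z (3 * n) * W z) d"
  proof (unfold d_def, rule cinf_ring_comp[OF X _ Y])
    show "smooth_fun m (\<lambda>z. f z + z (3 * n) * W z)"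
      using fm W by (intro smooth_add smooth_mult smooth_proj) (simp_all add: m_def)
  qed (simp add: t k_def)
  also have "\<dots> = cinf_add_mul \<Psi> (\<Psi> m f d) (\<Psi> m (\<lambda>z. z (3 * n)) d) (\<Psi> m W d)"
    by (rule cinf_add_mul_eval[OF X fm smooth_proj W d, symmetric]) (simp add: m_def)
  also have "\<Psi> m f d = \<Psi> n f t"
  proof -
    have "\<Psi> m f d = \<Psi> n f d" by (rule cinf_eval_mono[OF X f _ d]) (simp add: m_def)
    also have "\<dots> = \<Psi> n f t"
      by (rule cinf_ring_cong[OF X f]) (use proj in \<open>simp add: d_def hadamard_coords_fst k_def\<close>)
    finally show ?thesis .
  qed
  also have "\<Psi> m (\<lambda>z. z (3 * n)) d = t (2 * n)"
    using cinf_ring_proj[OF X, of "3 * n" m d] d proj[of "2 * n"]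
    by (simp add: m_def d_def hadamard_coords_last k_def)
  finally show ?thesis unfolding k_def m_def W_def d_def .
qed

lemma cinf_hadamard:
  assumes X: "cinf_ring X \<Psi>" and f: "smooth_fun n f"
    and x: "\<And>j. j < n \<Longrightarrow> x j \<in> X" and y: "\<And>j. j < n \<Longrightarrow> y j \<in> X" and e: "e \<in> X"
  obtains w where "w \<in> X"
    "\<Psi> n f (\<lambda>j. cinf_add_mul \<Psi> (x j) e (y j)) = cinf_add_mul \<Psi> (\<Psi> n f x) e w"
proof -
  define k where "k = Suc (2 * n)"
  define t where "t i = (if i < n then x i else if i < 2 * n then y (i - n) else e)" for i
  have t: "t i \<in> X" if "i < k" for i using that x y e by (auto simp: t_def k_def)
  have proj: "\<Psi> k (\<lambda>v. v i) t = t i" if "i < k" for i by (rule cinf_ring_proj[OF X that t])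
  have G: "smooth_fun k (\<lambda>v. v j + v (2 * n) * v (n + j))" if "j < n" for j
    using that by (intro smooth_add smooth_mult smooth_proj) (auto simp: k_def)
  have "cinf_add_mul \<Psi> (x j) e (y j) = \<Psi> k (\<lambda>v. v j + v (2 * n) * v (n + j)) t" if "j < n" for j
  proof -
    have "cinf_add_mul \<Psi> (\<Psi> k (\<lambda>v. v j) t) (\<Psi> k (\<lambda>v. v (2 * n)) t) (\<Psi> k (\<lambda>v. v (n + j)) t) =
        \<Psi> k (\<lambda>v. v j + v (2 * n) * v (n + j)) t"
      by (rule cinf_add_mul_eval[OF X _ _ _ t]) (use that in \<open>auto simp: k_def intro: smooth_proj\<close>)
    then show ?thesis
      using proj[of j] proj[of "2 * n"] proj[of "n + j"] that by (simp add: t_def k_def)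
  qed
  then have "\<Psi> n f (\<lambda>j. cinf_add_mul \<Psi> (x j) e (y j)) =
      \<Psi> k (\<lambda>v. f (\<lambda>j. v j + v (2 * n) * v (n + j))) t"
    by (simp add: cinf_ring_comp[OF X f G t] cong: cinf_ring_cong[OF X f])
  also have "\<dots> = cinf_add_mul \<Psi> (\<Psi> n f t) e
      (\<Psi> (Suc (3 * n)) (hadamard_remainder n f) (\<lambda>i. \<Psi> k (hadamard_coords n i) t))"
    using cinf_eval_hadamard[OF X f, of t] t by (simp add: k_def t_def)
  also have "\<Psi> n f t = \<Psi> n f x" by (rule cinf_ring_cong[OF X f]) (simp add: t_def)
  finally have eq: "\<Psi> n f (\<lambda>j. cinf_add_mul \<Psi> (x j) e (y j)) = cinf_add_mul \<Psi> (\<Psi> n f x) e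
      (\<Psi> (Suc (3 * n)) (hadamard_remainder n f) (\<lambda>i. \<Psi> k (hadamard_coords n i) t))" .
  have "\<Psi> (Suc (3 * n)) (hadamard_remainder n f) (\<lambda>i. \<Psi> k (hadamard_coords n i) t) \<in> X"
    by (rule cinf_ring_closed[OF X smooth_hadamard_remainder[OF f]])
       (use t in \<open>simp add: k_def cinf_ring_closed[OF X smooth_hadamard_coords]\<close>)
  then show ?thesis using eq by (rule that)
qed

lemma cinf_hom_add_mul:
  assumes "cinf_ring B \<Psi>" "cinf_hom A \<Phi> B \<Psi> h" "a \<in> A" "b \<in> A" "c \<in> A"
  shows "h (cinf_add_mul \<Phi> a b c) = cinf_add_mul \<Psi> (h a) (h b) (h c)"
proof -
  have "h (cinf_add_mul \<Phi> a b c) = \<Psi> 3 (\<lambda>v. v 0 + v 1 * v 2) (h \<circ> (\<lambda>j. [a, b, c] ! j))"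
    unfolding cinf_add_mul_def
    by (rule cinf_hom_op[OF assms(2) smooth_add_mul]) (use assms(3-5) in \<open>auto simp: less_Suc_eq numeral_3_eq_3\<close>)
  also have "\<dots> = cinf_add_mul \<Psi> (h a) (h b) (h c)"
    unfolding cinf_add_mul_def
    by (rule cinf_ring_cong[OF assms(1) smooth_add_mul]) (auto simp: less_Suc_eq numeral_3_eq_3)
  finally show ?thesis .
qed

lemma cinf_hom_mul:
  assumes "cinf_hom A \<Phi> B \<Psi> h" "a \<in> A" "b \<in> A"
  shows "h (cinf_mul \<Phi> a b) = cinf_mul \<Psi> (h a) (h b)"
  unfolding cinf_mul_def
  by (subst cinf_hom_op[OF assms(1) smooth_mul]) (use assms(2,3) in \<open>auto simp: o_def if_distrib\<close>)

lemma cinf_add_mul_zero: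
  assumes X: "cinf_ring X \<Psi>" and "a \<in> X" "b \<in> X" "c \<in> X"
    and zero: "b = cinf_const \<Psi> 0 \<or> c = cinf_const \<Psi> 0"
  shows "cinf_add_mul \<Psi> a b c = a"
proof -
  define t where "t = (\<lambda>j. [a, b, c] ! j)"
  have t: "t i \<in> X" if "i < length [a, b, c]" for i
    using that assms nth_mem[OF that] unfolding t_def by auto
  have proj: "\<Psi> 3 (\<lambda>v. v i) t = [a, b, c] ! i" if "i < 3" for i
    using cinf_ring_proj[OF X that t] that by (simp add: t_def)
  have zero3: "\<Psi> 3 (\<lambda>_. 0) t = cinf_const \<Psi> 0" by (rule cinf_eval_const[OF X t]) simp
  let ?p = "\<lambda>i v. v i :: real"
  have "cinf_add_mul \<Psi> a b c = \<Psi> 3 (\<lambda>v. (\<lambda>w. w 0 + w 1 * w 2) (\<lambda>j. map (\<lambda>F. F v) [?p 0, ?p 1, ?p 2] ! j)) t"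
    by (simp add: cinf_add_mul_def t_def)
  also have "\<dots> = \<Psi> 3 (\<lambda>v. (\<lambda>w. w 0 + w 1 * w 2) (\<lambda>j. map (\<lambda>F. F v) [?p 0,
      if b = cinf_const \<Psi> 0 then (\<lambda>_. 0) else ?p 1, if b = cinf_const \<Psi> 0 then ?p 2 else (\<lambda>_. 0)] ! j)) t"
    using zero proj zero3
    by (intro cinf_eval_subst_list[OF X smooth_add_mul _ _ _ t]) (auto simp: smooth_proj smooth_const)
  also have "\<dots> = \<Psi> 3 (\<lambda>v. v 0) t" by simp
  also have "\<dots> = a" using proj by simp
  finally show ?thesis .
qed

lemma cinf_const_idempotent:
  assumes "cinf_ring X \<Psi>" "r * r = r"
  shows "cinf_const \<Psi> r \<in> cinf_idempotents X \<Psi>"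
proof -
  have "cinf_mul \<Psi> (cinf_const \<Psi> r) (cinf_const \<Psi> r) = cinf_const \<Psi> r"
    using cinf_mul_eval[OF assms(1) smooth_const smooth_const, of 0 "\<lambda>_. undefined" r r] assms(2)
    by (simp add: cinf_const_def)
  then show ?thesis using cinf_const_mem[OF assms(1)] by (simp add: cinf_idempotents_def)
qed

text \<open>An idempotent \<open>a + x y\<close> with \<open>x\<^sup>2 = 0\<close> satisfies \<open>x y = (2a - 1)(e\<^sup>2 - e - x\<^sup>2y\<^sup>2) = 0\<close>,
  because \<open>(2a - 1)\<^sup>2 = 1\<close> when \<open>a \<in> {0, 1}\<close>.\<close>

lemma cinf_idempotent_const_add_nilpotent:
  assumes X: "cinf_ring X \<Psi>" and "x \<in> X" "y \<in> X" and x2: "cinf_mul \<Psi> x x = cinf_const \<Psi> 0"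
    and a: "a * a = a" and e: "e = cinf_add_mul \<Psi> (cinf_const \<Psi> a) x y"
    and idem: "cinf_mul \<Psi> e e = e"
  shows "e = cinf_const \<Psi> a"
proof -
  define t where "t = (\<lambda>j. [x, y] ! j)"
  have t: "t i \<in> X" if "i < 2" for i
    using that assms unfolding t_def by (auto simp: less_2_cases_iff)
  have p0: "\<Psi> 2 (\<lambda>v. v 0) t = x" and p1: "\<Psi> 2 (\<lambda>v. v 1) t = y"
    using cinf_ring_proj[OF X _ t, of 0] cinf_ring_proj[OF X _ t, of 1] by (simp_all add: t_def)
  have const: "\<Psi> 2 (\<lambda>_. r) t = cinf_const \<Psi> r" for r by (rule cinf_eval_const[OF X t])
  define E where "E = (\<lambda>v :: nat \<Rightarrow> real. a + v 0 * v 1)"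
  have sp: "smooth_fun 2 (\<lambda>v. v i)" if "i < 2" for i using that by (rule smooth_proj)
  have E: "smooth_fun 2 E" unfolding E_def by (intro smooth_add smooth_mult smooth_const sp) auto
  have "cinf_add_mul \<Psi> (\<Psi> 2 (\<lambda>_. a) t) (\<Psi> 2 (\<lambda>v. v 0) t) (\<Psi> 2 (\<lambda>v. v 1) t) = \<Psi> 2 E t"
    unfolding E_def by (rule cinf_add_mul_eval[OF X smooth_const sp sp t]) simp_all
  then have e_eq: "\<Psi> 2 E t = e" using p0 p1 const e by simp
  have "cinf_mul \<Psi> (\<Psi> 2 E t) (\<Psi> 2 E t) = \<Psi> 2 (\<lambda>v. E v * E v) t"
    by (rule cinf_mul_eval[OF X E E t])
  then have ee: "\<Psi> 2 (\<lambda>v. E v * E v) t = \<Psi> 2 E t" using e_eq idem by simp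
  have "cinf_mul \<Psi> (\<Psi> 2 (\<lambda>v. v 0) t) (\<Psi> 2 (\<lambda>v. v 0) t) = \<Psi> 2 (\<lambda>v. v 0 * v 0) t"
    by (rule cinf_mul_eval[OF X sp sp t]) simp_all
  then have xx: "\<Psi> 2 (\<lambda>v. v 0 * v 0) t = \<Psi> 2 (\<lambda>_. 0) t" using p0 x2 const by simp
  have a01: "a = 0 \<or> a = 1" using a by (metis mult_cancel_right1 mult_eq_0_iff)
  have "\<Psi> 2 (\<lambda>v. v 0 * v 1) t = \<Psi> 2 (\<lambda>v. (2 * a - 1) * (E v * E v - E v - v 0 * v 0 * (v 1 * v 1))) t"
    using a01 by (auto simp: E_def algebra_simps)
  also have "\<dots> = \<Psi> 2 (\<lambda>v. (2 * a - 1) * (E v - E v - 0 * (v 1 * v 1))) t"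
    using cinf_eval_subst_list[where k=2 and t=t, OF X _ _ _ _ t, where m=4 and V="\<lambda>w. (2 * a - 1) * (w 0 - w 1 - w 2 * w 3)"
        and Fs="[\<lambda>v. E v * E v, E, \<lambda>v. v 0 * v 0, \<lambda>v. v 1 * v 1]" and Gs="[E, E, \<lambda>_. 0, \<lambda>v. v 1 * v 1]"]
      E ee xx
    by (simp add: smooth_mult smooth_diff smooth_const smooth_proj numeral_eq_Suc)
  also have "\<dots> = \<Psi> 2 (\<lambda>_. 0) t" by simp
  finally have "\<Psi> 2 (\<lambda>v. v 0 * v 1) t = \<Psi> 2 (\<lambda>_. 0) t" .
  then have "\<Psi> 2 E t = \<Psi> 2 (\<lambda>v. a + 0) t"
    using cinf_eval_subst_list[where k=2 and t=t, OF X _ _ _ _ t, where m=2 and V="\<lambda>w. w 0 + w 1"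
        and Fs="[\<lambda>_. a, \<lambda>v. v 0 * v 1]" and Gs="[\<lambda>_. a, \<lambda>_. 0]"]
    by (simp add: E_def smooth_add smooth_mult smooth_const smooth_proj numeral_eq_Suc)
  then show ?thesis using e_eq const by simp
qed

lemma cinf_connected_iff:
  assumes X: "cinf_ring X \<Psi>" and "cinf_has_point X \<Psi>"
  shows "cinf_connected X \<Psi> \<longleftrightarrow> cinf_idempotents X \<Psi> \<subseteq> {cinf_const \<Psi> 0, cinf_const \<Psi> 1}"
proof -
  obtain h where "cinf_hom X \<Psi> UNIV real_cinf h"
    using assms(2) unfolding cinf_has_point_def by blast
  then have "h (cinf_const \<Psi> r) = r" for r using cinf_hom_const[OF cinf_ring_real] by simp
  then have "cinf_const \<Psi> 0 \<noteq> cinf_const \<Psi> 1" by (metis zero_neq_one)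
  moreover have "{cinf_const \<Psi> 0, cinf_const \<Psi> 1} \<subseteq> cinf_idempotents X \<Psi>"
    using cinf_const_idempotent[OF X] by simp
  ultimately show ?thesis
    unfolding cinf_connected_def
    by (metis card_2_iff card_seteq dual_order.refl finite.emptyI finite_insert subset_antisym)
qed

section \<open>Coproducts\<close>

text \<open>The universal property in \<^const>\<open>is_cinf_coproduct\<close> only quantifies over test rings carried
  by sets of real functions. A finitely generated ring embeds into such a carrier: its elements are
  values of terms in the generators, and a term is coded by the set of its labelled positions.\<close>

datatype cinf_term = Gen nat | App "(nat \<Rightarrow> real) \<Rightarrow> real" "cinf_term list"

fun eval_term :: "'x cinf_ops \<Rightarrow> (nat \<Rightarrow> 'x) \<Rightarrow> cinf_term \<Rightarrow> 'x" where
  "eval_term \<Psi> g (Gen k) = g k"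
| "eval_term \<Psi> g (App f ts) = \<Psi> (length ts) f (\<lambda>i. map (eval_term \<Psi> g) ts ! i)"

fun wf_term :: "nat \<Rightarrow> cinf_term \<Rightarrow> bool" where
  "wf_term m (Gen k) \<longleftrightarrow> k < m"
| "wf_term m (App f ts) \<longleftrightarrow> smooth_fun (length ts) f \<and> list_all (wf_term m) ts"

lemma eval_term_mem:
  assumes X: "cinf_ring X \<Psi>" and g: "\<And>k. k < m \<Longrightarrow> g k \<in> X"
  shows "wf_term m t \<Longrightarrow> eval_term \<Psi> g t \<in> X"
proof (induction t)
  case (App f ts)
  then have "\<forall>i<length ts. map (eval_term \<Psi> g) ts ! i \<in> X"
    by (auto simp: list_all_iff)
  then show ?case using App.prems by (auto intro!: cinf_ring_closed[OF X])
qed (simp add: g)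

lemma cinf_closed_term_values:
  assumes X: "cinf_ring X \<Psi>"
  shows "cinf_closed \<Psi> {eval_term \<Psi> g t | t. wf_term m t}"
  unfolding cinf_closed_def
proof (intro allI impI)
  fix n f a assume f: "smooth_fun n f" and a: "\<forall>i<n. a i \<in> {eval_term \<Psi> g t | t. wf_term m t}"
  have "\<exists>t. wf_term m t \<and> eval_term \<Psi> g t = a i" if "i < n" for i
    using a that by (simp, metis)
  then obtain tt where tt: "\<And>i. i < n \<Longrightarrow> wf_term m (tt i) \<and> eval_term \<Psi> g (tt i) = a i"
    by metis
  define ts where "ts = map tt [0..<n]"
  have "wf_term m (App f ts)" using f tt by (simp add: ts_def list_all_iff)
  moreover have "eval_term \<Psi> g (App f ts) = \<Psi> n f (\<lambda>i. map (eval_term \<Psi> g) ts ! i)"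
    by (simp add: ts_def)
  moreover have "\<dots> = \<Psi> n f a"
    using tt by (intro cinf_ring_cong[OF X f]) (simp add: ts_def)
  ultimately show "\<Psi> n f a \<in> {eval_term \<Psi> g t | t. wf_term m t}"
    by (intro CollectI exI[of _ "App f ts"]) simp
qed

lemma cinf_fg_term_span:
  assumes X: "cinf_ring X \<Psi>" and fg: "cinf_fg X \<Psi>"
  obtains m g where "\<And>k. k < m \<Longrightarrow> g k \<in> X" "\<And>x. x \<in> X \<Longrightarrow> \<exists>t. wf_term m t \<and> eval_term \<Psi> g t = x"
proof -
  obtain G where G: "finite G" "G \<subseteq> X" "\<And>S. G \<subseteq> S \<Longrightarrow> S \<subseteq> X \<Longrightarrow> cinf_closed \<Psi> S \<Longrightarrow> S = X"
    using fg unfolding cinf_fg_def by blast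
  obtain L where L: "set L = G" using finite_list[OF G(1)] by blast
  define m where "m = length L"
  define g where "g k = L ! k" for k
  have g: "g k \<in> X" if "k < m" for k using that G(2) L unfolding g_def m_def by auto
  define E where "E = {eval_term \<Psi> g t | t. wf_term m t}"
  have "G \<subseteq> E"
  proof
    fix x assume "x \<in> G"
    then obtain k where "k < m" "L ! k = x" using L by (auto simp: in_set_conv_nth m_def)
    then show "x \<in> E" unfolding E_def g_def by (intro CollectI exI[of _ "Gen k"]) simp
  qed
  moreover have "E \<subseteq> X"
  proof
    fix x assume "x \<in> E"
    then obtain t where "wf_term m t" "x = eval_term \<Psi> g t" unfolding E_def by blast
    then show "x \<in> X" using eval_term_mem[OF X g] by simp
  qed
  moreover have "cinf_closed \<Psi> E" unfolding E_def by (rule cinf_closed_term_values[OF X])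
  ultimately have "E = X" by (rule G(3))
  show ?thesis
  proof (rule that[OF g])
    fix x assume "x \<in> X"
    then show "\<exists>t. wf_term m t \<and> eval_term \<Psi> g t = x" using \<open>E = X\<close> unfolding E_def by blast
  qed
qed

primrec term_label :: "nat list \<Rightarrow> cinf_term \<Rightarrow> (nat \<times> ((nat \<Rightarrow> real) \<Rightarrow> real)) option" where
  "term_label [] t =
     (case t of Gen k \<Rightarrow> Some (0, \<lambda>_. real k) | App f ts \<Rightarrow> Some (Suc (length ts), f))"
| "term_label (i # p) t =
     (case t of Gen k \<Rightarrow> None | App f ts \<Rightarrow> if i < length ts then term_label p (ts ! i) else None)"

lemma term_label_inject: "(\<And>p. term_label p t = term_label p t') \<Longrightarrow> t = t'"
proof (induction t arbitrary: t')
  case (Gen k)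
  have "term_label [] t' = Some (0, \<lambda>_. real k)" using Gen[of "[]"] by simp
  then show ?case by (cases t') (auto dest: fun_cong)
next
  case (App f ts)
  from App.prems[of "[]"] obtain ts' where t': "t' = App f ts'" "length ts' = length ts"
    by (cases t') auto
  have "ts ! i = ts' ! i" if "i < length ts" for i
  proof (rule App.IH[OF nth_mem[OF that]])
    show "term_label p (ts ! i) = term_label p (ts' ! i)" for p
      using App.prems[of "i # p"] that t' by simp
  qed
  then show ?case using t' by (auto intro: nth_equalityI)
qed

text \<open>Coordinate \<open>0\<close> carries a tag for \<open>(p, a)\<close>: off the tag \<open>node_code p a f\<close> returns the tag,
  on it \<open>f\<close> of the remaining coordinates, so all of \<open>(p, a, f)\<close> can be read off.\<close>

definition node_code :: "nat list \<Rightarrow> nat \<Rightarrow> ((nat \<Rightarrow> real) \<Rightarrow> real) \<Rightarrow> (nat \<Rightarrow> real) \<Rightarrow> real" where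
  "node_code p a f = (\<lambda>x. if x 0 = real (to_nat (p, a)) then f (\<lambda>i. x (Suc i)) else real (to_nat (p, a)))"

lemma node_code_inject:
  assumes "node_code p a f = node_code p' a' f'"
  shows "p = p' \<and> a = a' \<and> f = f'"
proof -
  have "node_code p a f (\<lambda>_. -1) = node_code p' a' f' (\<lambda>_. -1)" using assms by simp
  then have pa: "(p, a) = (p', a')" unfolding node_code_def by simp
  have "f y = f' y" for y
    using fun_cong[OF assms, of "\<lambda>i. case i of 0 \<Rightarrow> real (to_nat (p, a)) | Suc j \<Rightarrow> y j"] pa
    by (simp add: node_code_def)
  then show ?thesis using pa by auto
qed

definition term_code :: "cinf_term \<Rightarrow> ((nat \<Rightarrow> real) \<Rightarrow> real) set" where
  "term_code t = {node_code p a f | p a f. term_label p t = Some (a, f)}"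

lemma node_code_mem_term_code: "node_code p a f \<in> term_code t \<longleftrightarrow> term_label p t = Some (a, f)"
  unfolding term_code_def by (auto dest: node_code_inject)

lemma inj_term_code: "inj term_code"
proof (rule injI)
  fix t t' assume eq: "term_code t = term_code t'"
  have "term_label p t = Some l \<longleftrightarrow> term_label p t' = Some l" for p l
    using eq node_code_mem_term_code[of p "fst l" "snd l"] by auto
  then have "term_label p t = term_label p t'" for p
    by (metis option.exhaust)
  then show "t = t'" by (rule term_label_inject)
qed

lemma cinf_fg_embedding:
  assumes "cinf_ring X \<Psi>" "cinf_fg X \<Psi>"
  obtains enc :: "'x \<Rightarrow> ((nat \<Rightarrow> real) \<Rightarrow> real) set" where "inj_on enc X"
proof -
  obtain m g where span: "\<And>x. x \<in> X \<Longrightarrow> \<exists>t. wf_term m t \<and> eval_term \<Psi> g t = x"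
    using cinf_fg_term_span[OF assms] by blast
  define choice where "choice x = (SOME t. wf_term m t \<and> eval_term \<Psi> g t = x)" for x
  have "eval_term \<Psi> g (choice x) = x" if "x \<in> X" for x
    unfolding choice_def using someI_ex[OF span[OF that]] by blast
  then have "inj_on (term_code \<circ> choice) X"
    using inj_term_code by (intro inj_onI) (metis comp_apply injD)
  then show ?thesis by (rule that)
qed

lemma cinf_ring_imp_closed: "cinf_ring X \<Psi> \<Longrightarrow> cinf_closed \<Psi> X"
  unfolding cinf_closed_def using cinf_ring_closed by blast

lemma cinf_fg_hom_image:
  assumes X: "cinf_closed \<Psi> X" and fg: "cinf_fg X \<Psi>" and h: "cinf_hom X \<Psi> Y \<Theta> h"
  obtains G where "finite G" "G \<subseteq> X" "\<And>S. cinf_closed \<Theta> S \<Longrightarrow> h ` G \<subseteq> S \<Longrightarrow> h ` X \<subseteq> S"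
proof -
  obtain G where G: "finite G" "G \<subseteq> X" "\<And>S. G \<subseteq> S \<Longrightarrow> S \<subseteq> X \<Longrightarrow> cinf_closed \<Psi> S \<Longrightarrow> S = X"
    using fg unfolding cinf_fg_def by blast
  have "h ` X \<subseteq> S" if S: "cinf_closed \<Theta> S" "h ` G \<subseteq> S" for S
  proof -
    have "cinf_closed \<Psi> {x \<in> X. h x \<in> S}"
      unfolding cinf_closed_def
    proof (intro allI impI)
      fix n f a assume f: "smooth_fun n f" and a: "\<forall>i<n. a i \<in> {x \<in> X. h x \<in> S}"
      have "h (\<Psi> n f a) = \<Theta> n f (h \<circ> a)" using a by (intro cinf_hom_op[OF h f]) auto
      moreover have "\<Theta> n f (h \<circ> a) \<in> S" using S(1) f a unfolding cinf_closed_def by auto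
      moreover have "\<Psi> n f a \<in> X" using X f a unfolding cinf_closed_def by auto
      ultimately show "\<Psi> n f a \<in> {x \<in> X. h x \<in> S}" by simp
    qed
    then have "{x \<in> X. h x \<in> S} = X" using G S(2) by (intro G(3)) auto
    then show ?thesis by blast
  qed
  with G(1,2) show ?thesis by (rule that)
qed

lemma cinf_fg_surj_hom:
  assumes "cinf_closed \<Psi> X" "cinf_fg X \<Psi>" "cinf_hom X \<Psi> Y \<Theta> h" "h ` X = Y"
  shows "cinf_fg Y \<Theta>"
proof -
  obtain G where "finite G" "G \<subseteq> X" "\<And>S. cinf_closed \<Theta> S \<Longrightarrow> h ` G \<subseteq> S \<Longrightarrow> h ` X \<subseteq> S"
    using cinf_fg_hom_image[OF assms(1-3)] by blast
  then show ?thesis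
    unfolding cinf_fg_def using assms(4) by (intro exI[of _ "h ` G"]) auto
qed

definition transport_ops :: "'x set \<Rightarrow> 'x cinf_ops \<Rightarrow> ('x \<Rightarrow> 'y) \<Rightarrow> 'y cinf_ops" where
  "transport_ops X \<Psi> enc = (\<lambda>n f a. enc (\<Psi> n f (\<lambda>i. inv_into X enc (a i))))"

lemma cinf_hom_transport:
  assumes X: "cinf_ring X \<Psi>" and inj: "inj_on enc X"
  shows "cinf_hom X \<Psi> (enc ` X) (transport_ops X \<Psi> enc) enc"
  unfolding cinf_hom_def transport_ops_def
proof (intro conjI ballI allI impI)
  fix n f a assume f: "smooth_fun n f" and a: "\<forall>i<n. a i \<in> X"
  have "\<Psi> n f a = \<Psi> n f (\<lambda>i. inv_into X enc ((enc \<circ> a) i))"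
    by (rule cinf_ring_cong[OF X f]) (simp add: a inj)
  then show "enc (\<Psi> n f a) = enc (\<Psi> n f (\<lambda>i. inv_into X enc ((enc \<circ> a) i)))" by simp
qed simp

lemma cinf_hom_transport_inv:
  assumes X: "cinf_ring X \<Psi>" and inj: "inj_on enc X"
  shows "cinf_hom (enc ` X) (transport_ops X \<Psi> enc) X \<Psi> (inv_into X enc)"
  unfolding cinf_hom_def transport_ops_def
proof (intro conjI ballI allI impI)
  fix n f a assume f: "smooth_fun n f" and a: "\<forall>i<n. a i \<in> enc ` X"
  have "\<Psi> n f (\<lambda>i. inv_into X enc (a i)) \<in> X"
    by (rule cinf_ring_closed[OF X f]) (simp add: a inv_into_into)
  then show "inv_into X enc (enc (\<Psi> n f (\<lambda>i. inv_into X enc (a i)))) = \<Psi> n f (inv_into X enc \<circ> a)"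
    using inj by (simp add: o_def)
qed (simp add: inv_into_into)

lemma cinf_ring_transport:
  assumes X: "cinf_ring X \<Psi>" and inj: "inj_on enc X"
  shows "cinf_ring (enc ` X) (transport_ops X \<Psi> enc)"
  unfolding cinf_ring_def
proof (intro conjI allI impI)
  let ?dec = "inv_into X enc" and ?\<Delta> = "transport_ops X \<Psi> enc"
  have dec: "?dec y \<in> X" if "y \<in> enc ` X" for y using that by (simp add: inv_into_into)
  have \<Delta>: "?\<Delta> n f a = enc (\<Psi> n f (\<lambda>i. ?dec (a i)))" for n f a by (simp add: transport_ops_def)
  fix n :: nat and f and a :: "nat \<Rightarrow> 'b"
  show "?\<Delta> n f a \<in> enc ` X" if "smooth_fun n f" "\<forall>i<n. a i \<in> enc ` X"
    unfolding \<Delta> using that by (intro imageI cinf_ring_closed[OF X]) (auto simp: dec)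
  show "?\<Delta> n f a = ?\<Delta> n f b" if "smooth_fun n f" "\<forall>i<n. a i = b i" for b
    unfolding \<Delta> using that by (intro arg_cong[where f=enc] cinf_ring_cong[OF X]) auto
  show "?\<Delta> n (\<lambda>x. x i) a = a i" if "i < n" "\<forall>j<n. a j \<in> enc ` X" for i
    unfolding \<Delta> using that cinf_ring_proj[OF X, of i n "\<lambda>i. ?dec (a i)"]
    by (simp add: dec f_inv_into_f)
  show "?\<Delta> n (\<lambda>x. f (\<lambda>j. g j x)) a = ?\<Delta> m f (\<lambda>j. ?\<Delta> n (g j) a)"
    if f: "smooth_fun m f" and g: "\<forall>j<m. smooth_fun n (g j)" and a: "\<forall>i<n. a i \<in> enc ` X" for m g
  proof -
    have "\<Psi> n (\<lambda>x. f (\<lambda>j. g j x)) (\<lambda>i. ?dec (a i)) = \<Psi> m f (\<lambda>j. \<Psi> n (g j) (\<lambda>i. ?dec (a i)))"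
      by (rule cinf_ring_comp[OF X f]) (simp_all add: g a dec)
    also have "\<dots> = \<Psi> m f (\<lambda>j. ?dec (?\<Delta> n (g j) a))"
      using inj g a by (intro cinf_ring_cong[OF X f]) (simp add: \<Delta> dec cinf_ring_closed[OF X])
    finally show ?thesis unfolding \<Delta>[of n] \<Delta>[of m] by simp
  qed
qed

lemma cinf_fg_transport:
  assumes "cinf_ring X \<Psi>" "cinf_fg X \<Psi>" "inj_on enc X"
  shows "cinf_fg (enc ` X) (transport_ops X \<Psi> enc)"
  using cinf_fg_surj_hom[OF cinf_ring_imp_closed assms(2) cinf_hom_transport] assms by blast

lemma is_cinf_coproductD:
  assumes "is_cinf_coproduct A \<Phi> B \<Psi> P \<Theta> i1 i2"
  shows "cinf_ring P \<Theta>" "cinf_fg P \<Theta>" "cinf_hom A \<Phi> P \<Theta> i1" "cinf_hom B \<Psi> P \<Theta> i2"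
  using assms unfolding is_cinf_coproduct_def by blast+

lemma is_cinf_coproduct_universal:
  fixes D :: "((nat \<Rightarrow> real) \<Rightarrow> real) set set"
  assumes "is_cinf_coproduct A \<Phi> B \<Psi> P \<Theta> i1 i2"
    and "cinf_ring D \<Delta>" "cinf_fg D \<Delta>" "cinf_hom A \<Phi> D \<Delta> u" "cinf_hom B \<Psi> D \<Delta> v"
  obtains w where "cinf_hom P \<Theta> D \<Delta> w" "\<forall>x\<in>A. w (i1 x) = u x" "\<forall>x\<in>B. w (i2 x) = v x"
    "\<forall>w'. cinf_hom P \<Theta> D \<Delta> w' \<and> (\<forall>x\<in>A. w' (i1 x) = u x) \<and> (\<forall>x\<in>B. w' (i2 x) = v x) \<longrightarrow>
       (\<forall>y\<in>P. w' y = w y)"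
proof -
  have "\<forall>(D :: ((nat \<Rightarrow> real) \<Rightarrow> real) set set) \<Delta> u v.
      cinf_ring D \<Delta> \<and> cinf_fg D \<Delta> \<and> cinf_hom A \<Phi> D \<Delta> u \<and> cinf_hom B \<Psi> D \<Delta> v \<longrightarrow>
      (\<exists>w. cinf_hom P \<Theta> D \<Delta> w \<and> (\<forall>x\<in>A. w (i1 x) = u x) \<and> (\<forall>x\<in>B. w (i2 x) = v x) \<and>
         (\<forall>w'. cinf_hom P \<Theta> D \<Delta> w' \<and> (\<forall>x\<in>A. w' (i1 x) = u x) \<and> (\<forall>x\<in>B. w' (i2 x) = v x)
               \<longrightarrow> (\<forall>y\<in>P. w' y = w y)))"
    using assms(1) unfolding is_cinf_coproduct_def by (elim conjE)
  then have "\<exists>w. cinf_hom P \<Theta> D \<Delta> w \<and> (\<forall>x\<in>A. w (i1 x) = u x) \<and> (\<forall>x\<in>B. w (i2 x) = v x) \<and>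
         (\<forall>w'. cinf_hom P \<Theta> D \<Delta> w' \<and> (\<forall>x\<in>A. w' (i1 x) = u x) \<and> (\<forall>x\<in>B. w' (i2 x) = v x)
               \<longrightarrow> (\<forall>y\<in>P. w' y = w y))"
    using assms(2-5) by simp
  then obtain w where "cinf_hom P \<Theta> D \<Delta> w \<and> (\<forall>x\<in>A. w (i1 x) = u x) \<and> (\<forall>x\<in>B. w (i2 x) = v x) \<and>
         (\<forall>w'. cinf_hom P \<Theta> D \<Delta> w' \<and> (\<forall>x\<in>A. w' (i1 x) = u x) \<and> (\<forall>x\<in>B. w' (i2 x) = v x)
               \<longrightarrow> (\<forall>y\<in>P. w' y = w y))" ..
  then show ?thesis by (elim conjE) (rule that)
qed

text \<open>Via this embedding, both halves of the universal property hold for finitely generated test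
  rings of any type.\<close>

lemma cinf_coproduct_copair:
  assumes cop: "is_cinf_coproduct A \<Phi> B \<Psi> P \<Theta> i1 i2"
    and D: "cinf_ring D \<Delta>" "cinf_fg D \<Delta>" and u: "cinf_hom A \<Phi> D \<Delta> u" and v: "cinf_hom B \<Psi> D \<Delta> v"
  obtains w where "cinf_hom P \<Theta> D \<Delta> w" "\<forall>x\<in>A. w (i1 x) = u x" "\<forall>x\<in>B. w (i2 x) = v x"
proof -
  obtain enc :: "'d \<Rightarrow> ((nat \<Rightarrow> real) \<Rightarrow> real) set" where inj: "inj_on enc D"
    using cinf_fg_embedding[OF D] by blast
  note enc = cinf_hom_transport[OF D(1) inj] and dec = cinf_hom_transport_inv[OF D(1) inj]
  obtain w where w: "cinf_hom P \<Theta> (enc ` D) (transport_ops D \<Delta> enc) w"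
    "\<forall>x\<in>A. w (i1 x) = (enc \<circ> u) x" "\<forall>x\<in>B. w (i2 x) = (enc \<circ> v) x"
    by (rule is_cinf_coproduct_universal[OF cop cinf_ring_transport[OF D(1) inj]
          cinf_fg_transport[OF D inj] cinf_hom_comp[OF u enc] cinf_hom_comp[OF v enc]])
  show ?thesis
  proof (rule that)
    show "cinf_hom P \<Theta> D \<Delta> (inv_into D enc \<circ> w)" by (rule cinf_hom_comp[OF w(1) dec])
    show "\<forall>x\<in>A. (inv_into D enc \<circ> w) (i1 x) = u x"
      using w(2) inj cinf_hom_mem[OF u] by simp
    show "\<forall>x\<in>B. (inv_into D enc \<circ> w) (i2 x) = v x"
      using w(3) inj cinf_hom_mem[OF v] by simp
  qed
qed

lemma cinf_coproduct_hom_eq: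
  assumes cop: "is_cinf_coproduct A \<Phi> B \<Psi> P \<Theta> i1 i2" and D: "cinf_ring D \<Delta>" "cinf_fg D \<Delta>"
    and w: "cinf_hom P \<Theta> D \<Delta> w" and w': "cinf_hom P \<Theta> D \<Delta> w'"
    and eq1: "\<And>x. x \<in> A \<Longrightarrow> w (i1 x) = w' (i1 x)" and eq2: "\<And>x. x \<in> B \<Longrightarrow> w (i2 x) = w' (i2 x)"
    and y: "y \<in> P"
  shows "w y = w' y"
proof -
  obtain enc :: "'d \<Rightarrow> ((nat \<Rightarrow> real) \<Rightarrow> real) set" where inj: "inj_on enc D"
    using cinf_fg_embedding[OF D] by blast
  note enc = cinf_hom_transport[OF D(1) inj]
  note i1 = is_cinf_coproductD(3)[OF cop] and i2 = is_cinf_coproductD(4)[OF cop]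
  obtain w0 where "cinf_hom P \<Theta> (enc ` D) (transport_ops D \<Delta> enc) w0"
    "\<forall>x\<in>A. w0 (i1 x) = (enc \<circ> (w \<circ> i1)) x" "\<forall>x\<in>B. w0 (i2 x) = (enc \<circ> (w \<circ> i2)) x"
    and uniq: "\<forall>w''. cinf_hom P \<Theta> (enc ` D) (transport_ops D \<Delta> enc) w'' \<and>
      (\<forall>x\<in>A. w'' (i1 x) = (enc \<circ> (w \<circ> i1)) x) \<and> (\<forall>x\<in>B. w'' (i2 x) = (enc \<circ> (w \<circ> i2)) x) \<longrightarrow>
      (\<forall>y\<in>P. w'' y = w0 y)"
    by (rule is_cinf_coproduct_universal[OF cop cinf_ring_transport[OF D(1) inj]
          cinf_fg_transport[OF D inj] cinf_hom_comp[OF cinf_hom_comp[OF i1 w] enc]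
          cinf_hom_comp[OF cinf_hom_comp[OF i2 w] enc]])
  have "(enc \<circ> w) y = w0 y"
    using uniq[rule_format, of "enc \<circ> w" y] cinf_hom_comp[OF w enc] y by simp
  moreover have "(enc \<circ> w') y = w0 y"
    using uniq[rule_format, of "enc \<circ> w'" y] cinf_hom_comp[OF w' enc] y by (simp add: eq1 eq2)
  ultimately have "enc (w y) = enc (w' y)" by simp
  then show ?thesis using inj cinf_hom_mem[OF w y] cinf_hom_mem[OF w' y] by (simp add: inj_on_eq_iff)
qed

lemma cinf_closed_Inter: "(\<And>T. T \<in> F \<Longrightarrow> cinf_closed \<Theta> T) \<Longrightarrow> cinf_closed \<Theta> (\<Inter> F)"
  unfolding cinf_closed_def by blast

definition cinf_span :: "'p cinf_ops \<Rightarrow> 'p set \<Rightarrow> 'p set" where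
  "cinf_span \<Theta> G = \<Inter> {T. cinf_closed \<Theta> T \<and> G \<subseteq> T}"

lemma cinf_span_least: "cinf_closed \<Theta> T \<Longrightarrow> G \<subseteq> T \<Longrightarrow> cinf_span \<Theta> G \<subseteq> T"
  unfolding cinf_span_def by (rule Inter_lower) simp

lemma cinf_span_superset: "G \<subseteq> cinf_span \<Theta> G"
  unfolding cinf_span_def by (rule Inter_greatest) simp

lemma cinf_span_closed: "cinf_closed \<Theta> (cinf_span \<Theta> G)"
  unfolding cinf_span_def by (rule cinf_closed_Inter) simp

lemma cinf_fg_span_images:
  assumes A: "cinf_closed \<Phi> A" "cinf_fg A \<Phi>" and B: "cinf_closed \<Psi> B" "cinf_fg B \<Psi>"
    and i1: "cinf_hom A \<Phi> P \<Theta> i1" and i2: "cinf_hom B \<Psi> P \<Theta> i2"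
  shows "cinf_fg (cinf_span \<Theta> (i1 ` A \<union> i2 ` B)) \<Theta>"
proof -
  let ?S = "cinf_span \<Theta> (i1 ` A \<union> i2 ` B)"
  obtain GA where GA: "finite GA" "GA \<subseteq> A" "\<And>T. cinf_closed \<Theta> T \<Longrightarrow> i1 ` GA \<subseteq> T \<Longrightarrow> i1 ` A \<subseteq> T"
    using cinf_fg_hom_image[OF A i1] by blast
  obtain GB where GB: "finite GB" "GB \<subseteq> B" "\<And>T. cinf_closed \<Theta> T \<Longrightarrow> i2 ` GB \<subseteq> T \<Longrightarrow> i2 ` B \<subseteq> T"
    using cinf_fg_hom_image[OF B i2] by blast
  show ?thesis
    unfolding cinf_fg_def
  proof (intro exI conjI allI impI)
    show "finite (i1 ` GA \<union> i2 ` GB)" using GA(1) GB(1) by simp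
    show "i1 ` GA \<union> i2 ` GB \<subseteq> ?S"
      using GA(2) GB(2) cinf_span_superset[of "i1 ` A \<union> i2 ` B" \<Theta>] by blast
    fix T assume T: "i1 ` GA \<union> i2 ` GB \<subseteq> T" "T \<subseteq> ?S" "cinf_closed \<Theta> T"
    have "i1 ` A \<union> i2 ` B \<subseteq> T" using GA(3)[OF T(3)] GB(3)[OF T(3)] T(1) by blast
    then have "?S \<subseteq> T" by (rule cinf_span_least[OF T(3)])
    then show "T = ?S" using T(2) by (rule subset_antisym[rotated])
  qed
qed

lemma cinf_coproduct_generated:
  assumes cop: "is_cinf_coproduct A \<Phi> B \<Psi> P \<Theta> i1 i2"
    and A: "cinf_closed \<Phi> A" "cinf_fg A \<Phi>" and B: "cinf_closed \<Psi> B" "cinf_fg B \<Psi>"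
    and T: "cinf_closed \<Theta> T" "i1 ` A \<subseteq> T" "i2 ` B \<subseteq> T"
  shows "P \<subseteq> T"
proof -
  note P = is_cinf_coproductD[OF cop]
  define S where "S = cinf_span \<Theta> (i1 ` A \<union> i2 ` B)"
  have images: "i1 ` A \<union> i2 ` B \<subseteq> S" unfolding S_def by (rule cinf_span_superset)
  have "S \<subseteq> P"
    unfolding S_def using cinf_hom_mem[OF P(3)] cinf_hom_mem[OF P(4)]
    by (intro cinf_span_least cinf_ring_imp_closed[OF P(1)]) auto
  have S: "cinf_ring S \<Theta>"
    unfolding S_def by (rule cinf_ring_subring[OF P(1) \<open>S \<subseteq> P\<close>[unfolded S_def] cinf_span_closed])
  have i1: "cinf_hom A \<Phi> S \<Theta> i1" and i2: "cinf_hom B \<Psi> S \<Theta> i2"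
    using cinf_hom_restrict[OF P(3)] cinf_hom_restrict[OF P(4)] images by blast+
  obtain w where w: "cinf_hom P \<Theta> S \<Theta> w" "\<forall>x\<in>A. w (i1 x) = i1 x" "\<forall>x\<in>B. w (i2 x) = i2 x"
    using cinf_coproduct_copair[OF cop S cinf_fg_span_images[OF A B P(3,4), folded S_def] i1 i2] .
  have "P \<subseteq> S"
  proof
    fix y assume "y \<in> P"
    have "(id \<circ> w) y = id y"
      by (rule cinf_coproduct_hom_eq[OF cop P(1,2) cinf_hom_comp[OF w(1) cinf_hom_inclusion[OF \<open>S \<subseteq> P\<close>]]
          cinf_hom_inclusion[OF order_refl] _ _ \<open>y \<in> P\<close>]) (simp_all add: w(2,3))
    then show "y \<in> S" using cinf_hom_mem[OF w(1) \<open>y \<in> P\<close>] by simp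
  qed
  also have "S \<subseteq> T" unfolding S_def using T by (intro cinf_span_least) auto
  finally show ?thesis .
qed

section \<open>The coproduct with the dual numbers\<close>

lemma dual_cinf_const: "cinf_const dual_cinf r = (r, 0)"
  by (simp add: cinf_const_def dual_cinf_def)

lemma partial_add_mul_1: "partial 1 (\<lambda>v. v 0 + v 1 * v 2) = (\<lambda>v. v 2)"
proof (rule partial_eqI)
  fix x :: "nat \<Rightarrow> real" and t
  show "((\<lambda>\<tau>. (x(1 := \<tau>)) 0 + (x(1 := \<tau>)) 1 * (x(1 := \<tau>)) 2) has_real_derivative (x(1 := t)) 2) (at t)"
    by simp (auto intro!: derivative_eq_intros)
qed

lemma dual_cinf_add_mul: "cinf_add_mul dual_cinf (r, 0) (0, 1) (s, 0) = (r, s)"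
  by (simp add: cinf_add_mul_def dual_cinf_def partial_add_mul_1[unfolded One_nat_def] numeral_3_eq_3 o_def)

lemma dual_cinf_eps_square: "cinf_mul dual_cinf (0, 1) (0, 1) = (0, 0)"
proof -
  have "partial 0 (\<lambda>v. v 0 * v (Suc 0)) = (\<lambda>v. v (Suc 0))"
    by (rule partial_eqI) (auto intro!: derivative_eq_intros)
  moreover have "partial (Suc 0) (\<lambda>v. v 0 * v (Suc 0)) = (\<lambda>v. v 0)"
  proof (rule partial_eqI)
    fix x :: "nat \<Rightarrow> real" and t
    have "((\<lambda>\<tau>. x 0 * \<tau>) has_real_derivative x 0) (at t)"
      using DERIV_cmult[OF DERIV_ident, of "x 0" t] by simp
    then show "((\<lambda>\<tau>. (x(Suc 0 := \<tau>)) 0 * (x(Suc 0 := \<tau>)) (Suc 0)) has_real_derivative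
        (x(Suc 0 := t)) 0) (at t)" by simp
  qed
  ultimately show ?thesis by (simp add: cinf_mul_def dual_cinf_def numeral_2_eq_2 o_def)
qed

lemma cinf_fg_dual: "cinf_fg UNIV dual_cinf"
  unfolding cinf_fg_def
proof (intro exI conjI allI impI)
  fix S assume S: "{(0, 1)} \<subseteq> S" "S \<subseteq> UNIV" "cinf_closed dual_cinf S"
  have const: "cinf_const dual_cinf r \<in> S" for r
    using S(3) smooth_const unfolding cinf_closed_def cinf_const_def by blast
  have "cinf_add_mul dual_cinf (r, 0) (0, 1) (s, 0) \<in> S" for r s
    unfolding cinf_add_mul_def
    using S(1) const[of r] const[of s] S(3) smooth_add_mul
    unfolding cinf_closed_def dual_cinf_const by (auto simp: less_Suc_eq numeral_3_eq_3)
  then show "S = UNIV" unfolding dual_cinf_add_mul by auto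
qed auto

lemma cinf_hom_augmentation:
  assumes A: "cinf_ring A \<Phi>"
  shows "cinf_hom UNIV dual_cinf A \<Phi> (cinf_const \<Phi> \<circ> fst)"
  unfolding cinf_hom_def
proof (intro conjI ballI allI impI)
  fix n f and a :: "nat \<Rightarrow> real \<times> real" assume f: "smooth_fun n f"
  have "\<Phi> n f ((cinf_const \<Phi> \<circ> fst) \<circ> a) = \<Phi> n f (\<lambda>j. \<Phi> 0 (\<lambda>_. fst (a j)) (\<lambda>_. undefined))"
    by (simp add: cinf_const_def o_def)
  also have "\<dots> = \<Phi> 0 (\<lambda>x. f (\<lambda>j. fst (a j))) (\<lambda>_. undefined)"
    by (rule cinf_ring_comp[OF A f, symmetric]) (auto intro: smooth_const)
  finally show "(cinf_const \<Phi> \<circ> fst) (dual_cinf n f a) = \<Phi> n f ((cinf_const \<Phi> \<circ> fst) \<circ> a)"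
    by (simp add: cinf_const_def dual_cinf_def o_def)
qed (simp add: cinf_const_mem[OF A])

locale cinf_dual_coproduct =
  fixes A :: "'a set" and \<Phi> :: "'a cinf_ops" and P :: "'p set" and \<Theta> :: "'p cinf_ops"
    and i1 :: "'a \<Rightarrow> 'p" and i2 :: "real \<times> real \<Rightarrow> 'p"
  assumes ring_A: "cinf_ring A \<Phi>" and fg_A: "cinf_fg A \<Phi>"
    and coproduct: "is_cinf_coproduct A \<Phi> (UNIV :: (real \<times> real) set) dual_cinf P \<Theta> i1 i2"
begin

lemmas ring_P = is_cinf_coproductD(1)[OF coproduct]
  and hom_i1 = is_cinf_coproductD(3)[OF coproduct]
  and hom_i2 = is_cinf_coproductD(4)[OF coproduct]

definition eps :: 'p where "eps = i2 (0, 1)"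

lemma eps_mem: "eps \<in> P"
  unfolding eps_def by (rule cinf_hom_mem[OF hom_i2]) simp

lemma i2_const: "i2 (r, 0) = cinf_const \<Theta> r"
  using cinf_hom_const[OF ring_P hom_i2, of r] by (simp add: dual_cinf_const)

lemma i1_const: "i1 (cinf_const \<Phi> r) = cinf_const \<Theta> r"
  by (rule cinf_hom_const[OF ring_P hom_i1])

lemma eps_square: "cinf_mul \<Theta> eps eps = cinf_const \<Theta> 0"
  using cinf_hom_mul[OF hom_i2, of "(0, 1)" "(0, 1)"] i2_const[of 0]
  by (simp add: eps_def dual_cinf_eps_square)

lemma i2_eq: "i2 (r, s) = cinf_add_mul \<Theta> (i1 (cinf_const \<Phi> r)) eps (cinf_const \<Theta> s)"
  using cinf_hom_add_mul[OF ring_P hom_i2, of "(r, 0)" "(0, 1)" "(s, 0)"]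
  by (simp add: dual_cinf_add_mul i2_const i1_const eps_def)

lemma retraction:
  obtains q where "cinf_hom P \<Theta> A \<Phi> q" "\<forall>x\<in>A. q (i1 x) = x" "\<forall>z. q (i2 z) = cinf_const \<Phi> (fst z)"
  using cinf_coproduct_copair[OF coproduct ring_A fg_A cinf_hom_inclusion[OF order_refl]
      cinf_hom_augmentation[OF ring_A]]
  by (metis UNIV_I comp_apply id_apply)

text \<open>Hadamard's lemma makes the elements \<open>i1 \<alpha> + \<epsilon> g\<close> a sub-\<open>C\<^sup>\<infinity>\<close>-ring, and it contains the
  images of both factors.\<close>

lemma dual_decomposition:
  assumes "y \<in> P"
  obtains \<alpha> g where "\<alpha> \<in> A" "g \<in> P" "y = cinf_add_mul \<Theta> (i1 \<alpha>) eps g"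
proof -
  define T where "T = {cinf_add_mul \<Theta> (i1 \<alpha>) eps g | \<alpha> g. \<alpha> \<in> A \<and> g \<in> P}"
  have "cinf_closed \<Theta> T"
    unfolding cinf_closed_def
  proof (intro allI impI)
    fix n f p assume f: "smooth_fun n f" and p: "\<forall>i<n. p i \<in> T"
    then have "\<exists>\<alpha> g. \<alpha> \<in> A \<and> g \<in> P \<and> p i = cinf_add_mul \<Theta> (i1 \<alpha>) eps g" if "i < n" for i
      using that unfolding T_def by blast
    then obtain \<alpha> g where \<alpha>g: "\<And>i. i < n \<Longrightarrow> \<alpha> i \<in> A \<and> g i \<in> P \<and> p i = cinf_add_mul \<Theta> (i1 (\<alpha> i)) eps (g i)"
      by metis
    obtain w where "w \<in> P"
      "\<Theta> n f (\<lambda>j. cinf_add_mul \<Theta> (i1 (\<alpha> j)) eps (g j)) = cinf_add_mul \<Theta> (\<Theta> n f (i1 \<circ> \<alpha>)) eps w"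
      using cinf_hadamard[OF ring_P f, of "i1 \<circ> \<alpha>" g eps] \<alpha>g cinf_hom_mem[OF hom_i1] eps_mem by auto
    moreover have "\<Theta> n f p = \<Theta> n f (\<lambda>j. cinf_add_mul \<Theta> (i1 (\<alpha> j)) eps (g j))"
      using \<alpha>g by (intro cinf_ring_cong[OF ring_P f]) simp
    moreover have "\<Theta> n f (i1 \<circ> \<alpha>) = i1 (\<Phi> n f \<alpha>)"
      using \<alpha>g by (intro cinf_hom_op[OF hom_i1 f, symmetric]) simp
    moreover have "\<Phi> n f \<alpha> \<in> A" using \<alpha>g by (intro cinf_ring_closed[OF ring_A f]) simp
    ultimately show "\<Theta> n f p \<in> T" unfolding T_def by auto
  qed
  moreover have "i1 \<alpha> \<in> T" if "\<alpha> \<in> A" for \<alpha>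
  proof -
    have "i1 \<alpha> = cinf_add_mul \<Theta> (i1 \<alpha>) eps (cinf_const \<Theta> 0)"
      using cinf_add_mul_zero[OF ring_P] cinf_hom_mem[OF hom_i1 that] eps_mem cinf_const_mem[OF ring_P]
      by simp
    then show ?thesis unfolding T_def using that cinf_const_mem[OF ring_P] by blast
  qed
  moreover have "i2 z \<in> T" for z
    using i2_eq[of "fst z" "snd z"] cinf_const_mem[OF ring_A] cinf_const_mem[OF ring_P]
    unfolding T_def by auto
  ultimately have "P \<subseteq> T"
    by (intro cinf_coproduct_generated[OF coproduct cinf_ring_imp_closed[OF ring_A] fg_A _ cinf_fg_dual])
       (auto simp: cinf_closed_def)
  then show ?thesis using assms that unfolding T_def by blast
qed

lemma idempotents_subset:
  assumes idA: "cinf_idempotents A \<Phi> \<subseteq> {cinf_const \<Phi> 0, cinf_const \<Phi> 1}"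
  shows "cinf_idempotents P \<Theta> \<subseteq> {cinf_const \<Theta> 0, cinf_const \<Theta> 1}"
proof
  fix e assume "e \<in> cinf_idempotents P \<Theta>"
  then have e: "e \<in> P" "cinf_mul \<Theta> e e = e" unfolding cinf_idempotents_def by auto
  obtain \<alpha> g where \<alpha>: "\<alpha> \<in> A" and g: "g \<in> P" and e_eq: "e = cinf_add_mul \<Theta> (i1 \<alpha>) eps g"
    using dual_decomposition[OF e(1)] by blast
  obtain q where q: "cinf_hom P \<Theta> A \<Phi> q" "\<forall>x\<in>A. q (i1 x) = x" "\<forall>z. q (i2 z) = cinf_const \<Phi> (fst z)"
    by (rule retraction)
  have "q e = cinf_add_mul \<Phi> \<alpha> (cinf_const \<Phi> 0) (q g)"
    unfolding e_eq using cinf_hom_add_mul[OF ring_A q(1)] q(2,3) \<alpha> g eps_mem cinf_hom_mem[OF hom_i1]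
    by (simp add: eps_def)
  also have "\<dots> = \<alpha>"
    by (rule cinf_add_mul_zero[OF ring_A \<alpha> cinf_const_mem[OF ring_A] cinf_hom_mem[OF q(1) g]]) simp
  finally have "q e = \<alpha>" .
  moreover have "cinf_mul \<Phi> (q e) (q e) = q e"
    using cinf_hom_mul[OF q(1) e(1) e(1)] e(2) by simp
  ultimately have "\<alpha> \<in> cinf_idempotents A \<Phi>" using \<alpha> unfolding cinf_idempotents_def by simp
  then obtain a :: real where a: "a * a = a" "\<alpha> = cinf_const \<Phi> a"
    using idA by auto
  have "e = cinf_const \<Theta> a"
    by (rule cinf_idempotent_const_add_nilpotent[OF ring_P eps_mem g eps_square a(1) _ e(2)])
       (simp add: e_eq a(2) i1_const)
  moreover have "a = 0 \<or> a = 1" using a(1) by (metis mult_cancel_right1 mult_eq_0_iff)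
  ultimately show "e \<in> {cinf_const \<Theta> 0, cinf_const \<Theta> 1}" by auto
qed

end

theorem lemma4p2:
  fixes A :: "'a set" and \<Phi> :: "'a cinf_ops"
    and P :: "'p set" and \<Theta> :: "'p cinf_ops"
    and i1 :: "'a \<Rightarrow> 'p" and i2 :: "real \<times> real \<Rightarrow> 'p"
  assumes "cinf_ring A \<Phi>" and "cinf_fg A \<Phi>"
    and "cinf_connected A \<Phi>" and "cinf_has_point A \<Phi>"
    and "is_cinf_coproduct A \<Phi> (UNIV :: (real \<times> real) set) dual_cinf P \<Theta> i1 i2"
  shows "cinf_connected P \<Theta> \<and> cinf_has_point P \<Theta>"
proof -
  interpret cinf_dual_coproduct A \<Phi> P \<Theta> i1 i2
    using assms(1,2,5) by unfold_locales
  obtain q where q: "cinf_hom P \<Theta> A \<Phi> q" by (rule retraction)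
  obtain h where h: "cinf_hom A \<Phi> UNIV real_cinf h"
    using assms(4) unfolding cinf_has_point_def by blast
  have point: "cinf_has_point P \<Theta>"
    unfolding cinf_has_point_def using cinf_hom_comp[OF q h] by blast
  have "cinf_idempotents A \<Phi> \<subseteq> {cinf_const \<Phi> 0, cinf_const \<Phi> 1}"
    using assms(3) cinf_connected_iff[OF assms(1,4)] by blast
  then have "cinf_idempotents P \<Theta> \<subseteq> {cinf_const \<Theta> 0, cinf_const \<Theta> 1}"
    by (rule idempotents_subset)
  then show ?thesis using cinf_connected_iff[OF ring_P point] point by blast
qed

end
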